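(* Let $(F,\tilde F,F_0)$ be a monoidal functor from a monoidal category to a $K$-linear tensor category and let $\tilde F+\sum_{k=1}^nF^{(k)}\epsilon^k$ (with $F_0$ undeformed) be an $n$-th order proper deformation of $F$. Then each $F^{(k)}$ lies in $C^2(F)$, and the obstruction $\omega_{A,B,C}=\sum_{l+m=n+1,\ 1\le l,m\le n}\lceil (F^{(m)}_{A,B}\otimes F(C))\circ F^{(l)}_{A\otimes B,C}\rceil-\sum_{p+q=n+1,\ 1\le p,q\le n}\lceil (F(A)\otimes F^{(q)}_{B,C})\circ F^{(p)}_{A,B\otimes C}\rceil$ to extending it to an $(n+1)$-st order proper deformation is a 3-cocycle of the proper deformation complex $C^\bullet(F)$.
   Context: A monoidal functor $(F,\tilde F,F_0)$: natural iso $\tilde F_{A,B}:F(A\otimes B)\to F(A)\otimes F(B)$ and iso $F_0:F(I)\to I$ satisfying hexagon and unit squares. $X^n(F)=\mathrm{Nat}(F\circ{}^n\otimes,\ \otimes^n\circ F^n)$ (left/right-parenthesized $n$-fold products), $\lceil f\rceil$ = $f$ padded with canonical coherence isomorphisms (associators, unit constraints, $\tilde F$, $F_0$, inverses) to have source $F$(left-parenthesized product) and target the right-parenthesized product of the $F(A_i)$; coboundary $(\delta\varphi)_{A_1,\dots,A_{n+1}}=\lceil F(A_1)\otimes\varphi_{A_2,\dots}\rceil+\sum_{i=1}^n(-1)^i\lceil\varphi_{\dots,A_i\otimes A_{i+1},\dots}\rceil+(-1)^{n+1}\lceil\varphi_{A_1,\dots,A_n}\otimes F(A_{n+1})\rceil$.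 Proper complex: $C^n(F)=\{\varphi\in X^n(F):\varphi_{A_1,\dots,A_n}=0\text{ whenever some }A_i=I\}$. An $n$-th order proper deformation of $F$ is a monoidal functor $(F,\tilde F+\sum_{k=1}^nF^{(k)}\epsilon^k,F_0)$, $F^{(k)}\in X^2(F)$, same underlying functor and same $F_0$, into the trivial deformation of the target over $K[\epsilon]/\langle\epsilon^{n+1}\rangle$ (hom-spaces tensored, undeformed structure maps). Extension to order $n+1$ by a term $F^{(n+1)}\epsilon^{n+1}$ is possible precisely when $\delta F^{(n+1)}=\omega$ is solvable. *)

theory Defs
  imports Main
begin

record ('o, 'm) cat =
  cObj  :: "'o set"
  cArr  :: "'m set"
  cDom  :: "'m \<Rightarrow> 'o"
  cCod  :: "'m \<Rightarrow> 'o"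
  cId   :: "'o \<Rightarrow> 'm"
  cComp :: "'m \<Rightarrow> 'm \<Rightarrow> 'm"   (* cComp g f = g o f *)

record ('o, 'm) moncat = "('o, 'm) cat" +
  mTo    :: "'o \<Rightarrow> 'o \<Rightarrow> 'o"
  mTm    :: "'m \<Rightarrow> 'm \<Rightarrow> 'm"
  mUnit  :: "'o"
  mAssoc :: "'o \<Rightarrow> 'o \<Rightarrow> 'o \<Rightarrow> 'm"    (* (X*Y)*Z -> X*(Y*Z) *)
  mLunit :: "'o \<Rightarrow> 'm"
  mRunit :: "'o \<Rightarrow> 'm"

record ('k, 'o, 'm) linmoncat = "('o, 'm) moncat" +
  lZero :: "'o \<Rightarrow> 'o \<Rightarrow> 'm"
  lAdd  :: "'m \<Rightarrow> 'm \<Rightarrow> 'm"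
  lSmul :: "'k \<Rightarrow> 'm \<Rightarrow> 'm"

definition Hom where
  "Hom C X Y = {f \<in> cArr C. cDom C f = X \<and> cCod C f = Y}"

definition is_cat where
  "is_cat C \<longleftrightarrow>
     (\<forall>X\<in>cObj C. cId C X \<in> Hom C X X) \<and>
     (\<forall>f\<in>cArr C. cDom C f \<in> cObj C \<and> cCod C f \<in> cObj C) \<and>
     (\<forall>f\<in>cArr C. \<forall>g\<in>cArr C. cCod C f = cDom C g \<longrightarrow>
         cComp C g f \<in> Hom C (cDom C f) (cCod C g)) \<and>
     (\<forall>f\<in>cArr C. cComp C f (cId C (cDom C f)) = f \<and> cComp C (cId C (cCod C f)) f = f) \<and>
     (\<forall>f\<in>cArr C. \<forall>g\<in>cArr C. \<forall>h\<in>cArr C. cCod C f = cDom C g \<and> cCod C g = cDom C h \<longrightarrow>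
         cComp C h (cComp C g f) = cComp C (cComp C h g) f)"

definition iso where
  "iso C f \<longleftrightarrow> f \<in> cArr C \<and>
     (\<exists>g\<in>Hom C (cCod C f) (cDom C f).
        cComp C g f = cId C (cDom C f) \<and> cComp C f g = cId C (cCod C f))"

definition is_moncat where
  "is_moncat C \<longleftrightarrow> is_cat C \<and>
     mUnit C \<in> cObj C \<and>
     (\<forall>X\<in>cObj C. \<forall>Y\<in>cObj C. mTo C X Y \<in> cObj C) \<and>
     (\<forall>f\<in>cArr C. \<forall>g\<in>cArr C.
        mTm C f g \<in> Hom C (mTo C (cDom C f) (cDom C g)) (mTo C (cCod C f) (cCod C g))) \<and>
     (\<forall>X\<in>cObj C. \<forall>Y\<in>cObj C. mTm C (cId C X) (cId C Y) = cId C (mTo C X Y)) \<and>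
     (\<forall>f\<in>cArr C. \<forall>g\<in>cArr C. \<forall>f'\<in>cArr C. \<forall>g'\<in>cArr C.
        cCod C f = cDom C g \<and> cCod C f' = cDom C g' \<longrightarrow>
        mTm C (cComp C g f) (cComp C g' f') = cComp C (mTm C g g') (mTm C f f')) \<and>
     (\<forall>X\<in>cObj C. \<forall>Y\<in>cObj C. \<forall>Z\<in>cObj C.
        mAssoc C X Y Z \<in> Hom C (mTo C (mTo C X Y) Z) (mTo C X (mTo C Y Z)) \<and>
        iso C (mAssoc C X Y Z)) \<and>
     (\<forall>X\<in>cObj C. mLunit C X \<in> Hom C (mTo C (mUnit C) X) X \<and> iso C (mLunit C X)) \<and>
     (\<forall>X\<in>cObj C. mRunit C X \<in> Hom C (mTo C X (mUnit C)) X \<and> iso C (mRunit C X)) \<and>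
     (\<forall>f\<in>cArr C. \<forall>g\<in>cArr C. \<forall>h\<in>cArr C.
        cComp C (mAssoc C (cCod C f) (cCod C g) (cCod C h)) (mTm C (mTm C f g) h)
        = cComp C (mTm C f (mTm C g h)) (mAssoc C (cDom C f) (cDom C g) (cDom C h))) \<and>
     (\<forall>f\<in>cArr C. cComp C (mLunit C (cCod C f)) (mTm C (cId C (mUnit C)) f)
                   = cComp C f (mLunit C (cDom C f))) \<and>
     (\<forall>f\<in>cArr C. cComp C (mRunit C (cCod C f)) (mTm C f (cId C (mUnit C)))
                   = cComp C f (mRunit C (cDom C f))) \<and>
     (\<forall>W\<in>cObj C. \<forall>X\<in>cObj C. \<forall>Y\<in>cObj C. \<forall>Z\<in>cObj C.
        cComp C (mTm C (cId C W) (mAssoc C X Y Z))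
          (cComp C (mAssoc C W (mTo C X Y) Z) (mTm C (mAssoc C W X Y) (cId C Z)))
        = cComp C (mAssoc C W X (mTo C Y Z)) (mAssoc C (mTo C W X) Y Z)) \<and>
     (\<forall>X\<in>cObj C. \<forall>Y\<in>cObj C.
        cComp C (mTm C (cId C X) (mLunit C Y)) (mAssoc C X (mUnit C) Y)
        = mTm C (mRunit C X) (cId C Y))"

definition is_linmoncat where
  "is_linmoncat D \<longleftrightarrow> is_moncat D \<and>
     (\<forall>X\<in>cObj D. \<forall>Y\<in>cObj D.
        lZero D X Y \<in> Hom D X Y \<and>
        (\<forall>f\<in>Hom D X Y. \<forall>g\<in>Hom D X Y. lAdd D f g \<in> Hom D X Y) \<and>
        (\<forall>c. \<forall>f\<in>Hom D X Y. lSmul D c f \<in> Hom D X Y) \<and>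
        (\<forall>f\<in>Hom D X Y. \<forall>g\<in>Hom D X Y. \<forall>h\<in>Hom D X Y.
            lAdd D (lAdd D f g) h = lAdd D f (lAdd D g h)) \<and>
        (\<forall>f\<in>Hom D X Y. \<forall>g\<in>Hom D X Y. lAdd D f g = lAdd D g f) \<and>
        (\<forall>f\<in>Hom D X Y. lAdd D (lZero D X Y) f = f) \<and>
        (\<forall>f\<in>Hom D X Y. lAdd D f (lSmul D (-1) f) = lZero D X Y) \<and>
        (\<forall>c. \<forall>f\<in>Hom D X Y. \<forall>g\<in>Hom D X Y.
            lSmul D c (lAdd D f g) = lAdd D (lSmul D c f) (lSmul D c g)) \<and>
        (\<forall>c d. \<forall>f\<in>Hom D X Y. lSmul D (c + d) f = lAdd D (lSmul D c f) (lSmul D d f)) \<and>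
        (\<forall>c d. \<forall>f\<in>Hom D X Y. lSmul D (c * d) f = lSmul D c (lSmul D d f)) \<and>
        (\<forall>f\<in>Hom D X Y. lSmul D 1 f = f)) \<and>
     (\<forall>X\<in>cObj D. \<forall>Y\<in>cObj D. \<forall>Z\<in>cObj D.
        (\<forall>g\<in>Hom D Y Z. \<forall>f\<in>Hom D X Y. \<forall>f'\<in>Hom D X Y.
            cComp D g (lAdd D f f') = lAdd D (cComp D g f) (cComp D g f')) \<and>
        (\<forall>g\<in>Hom D Y Z. \<forall>g'\<in>Hom D Y Z. \<forall>f\<in>Hom D X Y.
            cComp D (lAdd D g g') f = lAdd D (cComp D g f) (cComp D g' f)) \<and>
        (\<forall>c. \<forall>g\<in>Hom D Y Z. \<forall>f\<in>Hom D X Y.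
            cComp D g (lSmul D c f) = lSmul D c (cComp D g f) \<and>
            cComp D (lSmul D c g) f = lSmul D c (cComp D g f))) \<and>
     (\<forall>X\<in>cObj D. \<forall>Y\<in>cObj D. \<forall>X'\<in>cObj D. \<forall>Y'\<in>cObj D.
        (\<forall>f\<in>Hom D X Y. \<forall>f'\<in>Hom D X Y. \<forall>g\<in>Hom D X' Y'.
            mTm D (lAdd D f f') g = lAdd D (mTm D f g) (mTm D f' g)) \<and>
        (\<forall>f\<in>Hom D X Y. \<forall>g\<in>Hom D X' Y'. \<forall>g'\<in>Hom D X' Y'.
            mTm D f (lAdd D g g') = lAdd D (mTm D f g) (mTm D f g')) \<and>
        (\<forall>c. \<forall>f\<in>Hom D X Y. \<forall>g\<in>Hom D X' Y'.
            mTm D (lSmul D c f) g = lSmul D c (mTm D f g) \<and>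
            mTm D f (lSmul D c g) = lSmul D c (mTm D f g)))"

fun lsum where
  "lsum D X Y f 0 = lZero D X Y"
| "lsum D X Y f (Suc m) = lAdd D (lsum D X Y f m) (f m)"

definition lneg where
  "lneg D f = lSmul D (-1) f"

definition is_functor where
  "is_functor C D FO FM \<longleftrightarrow>
     (\<forall>X\<in>cObj C. FO X \<in> cObj D) \<and>
     (\<forall>f\<in>cArr C. FM f \<in> Hom D (FO (cDom C f)) (FO (cCod C f))) \<and>
     (\<forall>X\<in>cObj C. FM (cId C X) = cId D (FO X)) \<and>
     (\<forall>f\<in>cArr C. \<forall>g\<in>cArr C. cCod C f = cDom C g \<longrightarrow>
        FM (cComp C g f) = cComp D (FM g) (FM f))"

definition is_monfun where
  "is_monfun C D FO FM Ft F0 \<longleftrightarrow> is_moncat C \<and> is_moncat D \<and> is_functor C D FO FM \<and>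
     (\<forall>X\<in>cObj C. \<forall>Y\<in>cObj C.
        Ft X Y \<in> Hom D (FO (mTo C X Y)) (mTo D (FO X) (FO Y)) \<and> iso D (Ft X Y)) \<and>
     (\<forall>f\<in>cArr C. \<forall>g\<in>cArr C.
        cComp D (Ft (cCod C f) (cCod C g)) (FM (mTm C f g))
        = cComp D (mTm D (FM f) (FM g)) (Ft (cDom C f) (cDom C g))) \<and>
     F0 \<in> Hom D (FO (mUnit C)) (mUnit D) \<and> iso D F0 \<and>
     (\<forall>X\<in>cObj C. \<forall>Y\<in>cObj C. \<forall>Z\<in>cObj C.
        cComp D (mAssoc D (FO X) (FO Y) (FO Z))
          (cComp D (mTm D (Ft X Y) (cId D (FO Z))) (Ft (mTo C X Y) Z))
        = cComp D (mTm D (cId D (FO X)) (Ft Y Z))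
            (cComp D (Ft X (mTo C Y Z)) (FM (mAssoc C X Y Z)))) \<and>
     (\<forall>X\<in>cObj C. FM (mLunit C X)
        = cComp D (mLunit D (FO X)) (cComp D (mTm D F0 (cId D (FO X))) (Ft (mUnit C) X))) \<and>
     (\<forall>X\<in>cObj C. FM (mRunit C X)
        = cComp D (mRunit D (FO X)) (cComp D (mTm D (cId D (FO X)) F0) (Ft X (mUnit C))))"

section \<open>Trivial deformation over K[eps]/(eps^(n+1))\<close>

text \<open>A morphism of the deformed category is a coefficient sequence p with p k in Hom X Y
  for k <= n and p k = 0 for k > n (it stands for sum_k p k eps^k).\<close>

definition pconst where
  "pconst D (n::nat) f = (\<lambda>k::nat. if k = 0 then f else lZero D (cDom D f) (cCod D f))"

definition tdef where
  "tdef D n = \<lparr>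
     cObj = cObj D,
     cArr = {p. p 0 \<in> cArr D \<and>
                (\<forall>k\<le>n. p k \<in> Hom D (cDom D (p 0)) (cCod D (p 0))) \<and>
                (\<forall>k>n. p k = lZero D (cDom D (p 0)) (cCod D (p 0)))},
     cDom = (\<lambda>p. cDom D (p 0)),
     cCod = (\<lambda>p. cCod D (p 0)),
     cId = (\<lambda>X. pconst D n (cId D X)),
     cComp = (\<lambda>q p k. if k \<le> n
               then lsum D (cDom D (p 0)) (cCod D (q 0)) (\<lambda>i. cComp D (q i) (p (k - i))) (Suc k)
               else lZero D (cDom D (p 0)) (cCod D (q 0))),
     mTo = mTo D,
     mTm = (\<lambda>p q k. if k \<le> n
               then lsum D (mTo D (cDom D (p 0)) (cDom D (q 0))) (mTo D (cCod D (p 0)) (cCod D (q 0)))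
                      (\<lambda>i. mTm D (p i) (q (k - i))) (Suc k)
               else lZero D (mTo D (cDom D (p 0)) (cDom D (q 0))) (mTo D (cCod D (p 0)) (cCod D (q 0)))),
     mUnit = mUnit D,
     mAssoc = (\<lambda>X Y Z. pconst D n (mAssoc D X Y Z)),
     mLunit = (\<lambda>X. pconst D n (mLunit D X)),
     mRunit = (\<lambda>X. pconst D n (mRunit D X)),
     lZero = (\<lambda>X Y (k::nat). lZero D X Y),
     lAdd = (\<lambda>p q (k::nat). lAdd D (p k) (q k)),
     lSmul = (\<lambda>c p (k::nat). lSmul D c (p k)) \<rparr>"

definition inX2 where
  "inX2 C D FO FM \<phi> \<longleftrightarrow>
     (\<forall>A\<in>cObj C. \<forall>B\<in>cObj C. \<phi> A B \<in> Hom D (FO (mTo C A B)) (mTo D (FO A) (FO B))) \<and>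
     (\<forall>f\<in>cArr C. \<forall>g\<in>cArr C.
        cComp D (\<phi> (cCod C f) (cCod C g)) (FM (mTm C f g))
        = cComp D (mTm D (FM f) (FM g)) (\<phi> (cDom C f) (cDom C g)))"

definition inC2 where
  "inC2 C D FO FM \<phi> \<longleftrightarrow> inX2 C D FO FM \<phi> \<and>
     (\<forall>A\<in>cObj C. \<forall>B\<in>cObj C. (A = mUnit C \<or> B = mUnit C) \<longrightarrow>
        \<phi> A B = lZero D (FO (mTo C A B)) (mTo D (FO A) (FO B)))"

definition inX3 where
  "inX3 C D FO FM \<phi> \<longleftrightarrow>
     (\<forall>A\<in>cObj C. \<forall>B\<in>cObj C. \<forall>E\<in>cObj C.
        \<phi> A B E \<in> Hom D (FO (mTo C (mTo C A B) E)) (mTo D (FO A) (mTo D (FO B) (FO E)))) \<and>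
     (\<forall>f\<in>cArr C. \<forall>g\<in>cArr C. \<forall>h\<in>cArr C.
        cComp D (\<phi> (cCod C f) (cCod C g) (cCod C h)) (FM (mTm C (mTm C f g) h))
        = cComp D (mTm D (FM f) (mTm D (FM g) (FM h))) (\<phi> (cDom C f) (cDom C g) (cDom C h)))"

definition inC3 where
  "inC3 C D FO FM \<phi> \<longleftrightarrow> inX3 C D FO FM \<phi> \<and>
     (\<forall>A\<in>cObj C. \<forall>B\<in>cObj C. \<forall>E\<in>cObj C. (A = mUnit C \<or> B = mUnit C \<or> E = mUnit C) \<longrightarrow>
        \<phi> A B E = lZero D (FO (mTo C (mTo C A B) E)) (mTo D (FO A) (mTo D (FO B) (FO E))))"

text \<open>Coboundary of a 3-cochain; each term padded with canonical coherence maps so that it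
  goes F(((A*B)*E)*G) -> F A * (F B * (F E * F G)).\<close>

definition delta3 where
  "delta3 C D FO FM Ft \<phi> A B E G =
     (let FA = FO A; FB = FO B; FE = FO E; FG = FO G;
          t1 = cComp D (mTm D (cId D FA) (\<phi> B E G))
                 (cComp D (Ft A (mTo C (mTo C B E) G))
                   (cComp D (FM (mAssoc C A (mTo C B E) G))
                     (FM (mTm C (mAssoc C A B E) (cId C G)))));
          t2 = cComp D (mAssoc D FA FB (mTo D FE FG))
                 (cComp D (mTm D (Ft A B) (cId D (mTo D FE FG))) (\<phi> (mTo C A B) E G));
          t3 = cComp D (mTm D (cId D FA)
                          (cComp D (mAssoc D FB FE FG) (mTm D (Ft B E) (cId D FG))))
                 (cComp D (\<phi> A (mTo C B E) G) (FM (mTm C (mAssoc C A B E) (cId C G))));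
          t4 = cComp D (mTm D (cId D FA) (mTm D (cId D FB) (Ft E G)))
                 (cComp D (\<phi> A B (mTo C E G)) (FM (mAssoc C (mTo C A B) E G)));
          t5 = cComp D (mTm D (cId D FA) (mAssoc D FB FE FG))
                 (cComp D (mAssoc D FA (mTo D FB FE) FG)
                   (cComp D (mTm D (\<phi> A B E) (cId D FG)) (Ft (mTo C (mTo C A B) E) G)))
      in lAdd D (lAdd D (lAdd D (lAdd D t1 (lneg D t2)) t3) (lneg D t4)) t5)"

definition is_3cocycle where
  "is_3cocycle C D FO FM Ft \<phi> \<longleftrightarrow> inC3 C D FO FM \<phi> \<and>
     (\<forall>A\<in>cObj C. \<forall>B\<in>cObj C. \<forall>E\<in>cObj C. \<forall>G\<in>cObj C.
        delta3 C D FO FM Ft \<phi> A B E G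
        = lZero D (FO (mTo C (mTo C (mTo C A B) E) G))
                  (mTo D (FO A) (mTo D (FO B) (mTo D (FO E) (FO G)))))"

definition deformed_Ft where
  "deformed_Ft C D FO Ft (n::nat) Fk = (\<lambda>A B (k::nat).
     if k = 0 then Ft A B
     else if k \<le> n then Fk k A B
     else lZero D (FO (mTo C A B)) (mTo D (FO A) (FO B)))"

definition is_proper_deformation where
  "is_proper_deformation C D FO FM Ft F0 n Fk \<longleftrightarrow>
     (\<forall>k\<in>{1..n}. inX2 C D FO FM (Fk k)) \<and>
     is_monfun C (tdef D n) FO (\<lambda>f. pconst D n (FM f)) (deformed_Ft C D FO Ft n Fk) (pconst D n F0)"

definition obstruction where
  "obstruction C D FO FM n Fk = (\<lambda>A B E.
     (let X = FO (mTo C (mTo C A B) E); Y = mTo D (FO A) (mTo D (FO B) (FO E)) in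
      lAdd D
        (lsum D X Y (\<lambda>i. let l = i + 1; m = n - i in
            cComp D (mAssoc D (FO A) (FO B) (FO E))
              (cComp D (mTm D (Fk m A B) (cId D (FO E))) (Fk l (mTo C A B) E))) n)
        (lneg D (lsum D X Y (\<lambda>i. let p = i + 1; q = n - i in
            cComp D (mTm D (cId D (FO A)) (Fk q B E))
              (cComp D (Fk p A (mTo C B E)) (FM (mAssoc C A B E)))) n))))"

end

theory Submission
  imports Defs
begin

text \<open>
  The deformed structure map \<open>Ft + \<Sum>\<^sub>k Fk k \<epsilon>\<^sup>k\<close> satisfies the hexagon and unit axioms of a
  monoidal functor into the trivial deformation of the target. Comparing coefficients of
  \<open>\<epsilon>\<^sup>k\<close> in the unit axioms shows that each \<open>Fk k\<close> vanishes as soon as one argument is the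
  unit (the unitors and \<open>F0 \<otimes> 1\<close> are invertible), and comparing coefficients in the hexagon
  shows that the \<open>\<epsilon>\<^sup>m\<close>-coefficient \<open>H\<^sub>m\<close> of the difference of its two sides vanishes for
  \<open>m \<le> n\<close>. The obstruction is \<open>H\<^sub>n\<^sub>+\<^sub>1\<close>, whose two extreme terms contain the vanishing
  coefficient of \<open>\<epsilon>\<^sup>n\<^sup>+\<^sup>1\<close>.

  The cocycle condition is a Bianchi identity: writing \<open>\<delta>\<^sub>a\<close> for the coboundary with \<open>Ft\<close>
  replaced by the coefficient of \<open>\<epsilon>\<^sup>a\<close>, one has \<open>\<Sum>\<^sub>a\<^sub>+\<^sub>m\<^sub>=\<^sub>N \<delta>\<^sub>a H\<^sub>m = 0\<close> for every \<open>N\<close>.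
  Expanded, the left side is a sum over \<open>a + b + c = N\<close> of ten terms, which cancel in
  five pairs after permuting \<open>a, b, c\<close>, by naturality of the coefficients and of the
  associators and by the pentagon axioms. For \<open>N = n + 1\<close> every summand with \<open>a \<ge> 1\<close>
  vanishes because \<open>H\<^sub>m = 0\<close> for \<open>m \<le> n\<close>, which leaves \<open>\<delta> H\<^sub>n\<^sub>+\<^sub>1 = 0\<close>.
\<close>

locale monoidal_category =
  fixes C :: "('o, 'm, 'z) moncat_scheme"
  assumes monoidal: "is_moncat C"
begin

abbreviation "Ob \<equiv> cObj C"
abbreviation "Arr \<equiv> cArr C"
abbreviation "H \<equiv> Hom C"
abbreviation "dm \<equiv> cDom C"
abbreviation "cd \<equiv> cCod C"
abbreviation "cmp \<equiv> cComp C"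
abbreviation "idm \<equiv> cId C"
abbreviation "to \<equiv> mTo C"
abbreviation "tm \<equiv> mTm C"
abbreviation "al \<equiv> mAssoc C"
abbreviation "tunit \<equiv> mUnit C"

lemma category: "is_cat C"
  using monoidal unfolding is_moncat_def by simp

lemma hom_arr: "f \<in> H X Y \<Longrightarrow> f \<in> Arr"
  and hom_dom: "f \<in> H X Y \<Longrightarrow> dm f = X"
  and hom_cod: "f \<in> H X Y \<Longrightarrow> cd f = Y"
  and arr_hom: "f \<in> Arr \<Longrightarrow> f \<in> H (dm f) (cd f)"
  and hom_intro: "f \<in> Arr \<Longrightarrow> dm f = X \<Longrightarrow> cd f = Y \<Longrightarrow> f \<in> H X Y"
  by (simp_all add: Hom_def)

lemma dm_ob [simp]: "f \<in> Arr \<Longrightarrow> dm f \<in> Ob"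
  and cd_ob [simp]: "f \<in> Arr \<Longrightarrow> cd f \<in> Ob"
  and arr_id [simp]: "X \<in> Ob \<Longrightarrow> idm X \<in> Arr"
  and dom_id [simp]: "X \<in> Ob \<Longrightarrow> dm (idm X) = X"
  and cod_id [simp]: "X \<in> Ob \<Longrightarrow> cd (idm X) = X"
  and arr_comp [simp]: "f \<in> Arr \<Longrightarrow> g \<in> Arr \<Longrightarrow> cd f = dm g \<Longrightarrow> cmp g f \<in> Arr"
  and dom_comp [simp]: "f \<in> Arr \<Longrightarrow> g \<in> Arr \<Longrightarrow> cd f = dm g \<Longrightarrow> dm (cmp g f) = dm f"
  and cod_comp [simp]: "f \<in> Arr \<Longrightarrow> g \<in> Arr \<Longrightarrow> cd f = dm g \<Longrightarrow> cd (cmp g f) = cd g"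
  and comp_id_arr: "f \<in> Arr \<Longrightarrow> cmp (idm (cd f)) f = f \<and> cmp f (idm (dm f)) = f"
  and comp_assoc_arr: "f \<in> Arr \<Longrightarrow> g \<in> Arr \<Longrightarrow> h \<in> Arr \<Longrightarrow> cd f = dm g \<Longrightarrow> cd g = dm h \<Longrightarrow>
    cmp (cmp h g) f = cmp h (cmp g f)"
  using category unfolding is_cat_def by (simp_all add: Hom_def)

lemma comp_id_left_arr: "f \<in> Arr \<Longrightarrow> cd f = Y \<Longrightarrow> cmp (idm Y) f = f"
  and comp_id_right_arr: "f \<in> Arr \<Longrightarrow> dm f = X \<Longrightarrow> cmp f (idm X) = f"
  using comp_id_arr by blast+

lemma hom_obs: "f \<in> H X Y \<Longrightarrow> X \<in> Ob \<and> Y \<in> Ob"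
  by (auto simp: Hom_def)

lemma id_hom [intro, simp]: "X \<in> Ob \<Longrightarrow> idm X \<in> H X X"
  by (simp add: Hom_def)

lemma comp_hom [intro]: "f \<in> H X Y \<Longrightarrow> g \<in> H Y Z \<Longrightarrow> cmp g f \<in> H X Z"
  by (simp add: Hom_def)

lemma comp_assoc: "f \<in> H W X \<Longrightarrow> g \<in> H X Y \<Longrightarrow> h \<in> H Y Z \<Longrightarrow>
    cmp h (cmp g f) = cmp (cmp h g) f"
  by (simp add: Hom_def comp_assoc_arr)

lemma comp_id_left [simp]: "f \<in> H X Y \<Longrightarrow> cmp (idm Y) f = f"
  and comp_id_right [simp]: "f \<in> H X Y \<Longrightarrow> cmp f (idm X) = f"
  by (simp_all add: Hom_def comp_id_left_arr comp_id_right_arr)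

lemma tunit_ob [simp]: "tunit \<in> Ob"
  and to_ob [simp]: "X \<in> Ob \<Longrightarrow> Y \<in> Ob \<Longrightarrow> to X Y \<in> Ob"
  using monoidal unfolding is_moncat_def by simp_all

lemma tm_hom [intro]: "f \<in> H X Y \<Longrightarrow> g \<in> H X' Y' \<Longrightarrow> tm f g \<in> H (to X X') (to Y Y')"
  using monoidal unfolding is_moncat_def by (simp add: Hom_def)

lemma tm_id: "X \<in> Ob \<Longrightarrow> Y \<in> Ob \<Longrightarrow> tm (idm X) (idm Y) = idm (to X Y)"
  using monoidal unfolding is_moncat_def by simp

lemma interchange: "f \<in> H X Y \<Longrightarrow> g \<in> H Y Z \<Longrightarrow> f' \<in> H X' Y' \<Longrightarrow> g' \<in> H Y' Z' \<Longrightarrow>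
    tm (cmp g f) (cmp g' f') = cmp (tm g g') (tm f f')"
  using monoidal unfolding is_moncat_def by (simp add: Hom_def)

lemma al_hom [intro]: "X \<in> Ob \<Longrightarrow> Y \<in> Ob \<Longrightarrow> Z \<in> Ob \<Longrightarrow> al X Y Z \<in> H (to (to X Y) Z) (to X (to Y Z))"
  using monoidal unfolding is_moncat_def by simp

lemma al_natural: "f \<in> H X X' \<Longrightarrow> g \<in> H Y Y' \<Longrightarrow> h \<in> H Z Z' \<Longrightarrow>
    cmp (al X' Y' Z') (tm (tm f g) h) = cmp (tm f (tm g h)) (al X Y Z)"
proof -
  have "\<forall>f\<in>Arr. \<forall>g\<in>Arr. \<forall>h\<in>Arr. cmp (al (cd f) (cd g) (cd h)) (tm (tm f g) h)
          = cmp (tm f (tm g h)) (al (dm f) (dm g) (dm h))"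
    using monoidal unfolding is_moncat_def by (elim conjE) assumption
  then show "f \<in> H X X' \<Longrightarrow> g \<in> H Y Y' \<Longrightarrow> h \<in> H Z Z' \<Longrightarrow> ?thesis"
    by (auto simp: Hom_def)
qed

lemma pentagon: "W \<in> Ob \<Longrightarrow> X \<in> Ob \<Longrightarrow> Y \<in> Ob \<Longrightarrow> Z \<in> Ob \<Longrightarrow>
    cmp (tm (idm W) (al X Y Z)) (cmp (al W (to X Y) Z) (tm (al W X Y) (idm Z)))
    = cmp (al W X (to Y Z)) (al (to W X) Y Z)"
  using monoidal unfolding is_moncat_def by simp

lemma lunit_hom: "X \<in> Ob \<Longrightarrow> mLunit C X \<in> H (to tunit X) X"
  and lunit_iso: "X \<in> Ob \<Longrightarrow> iso C (mLunit C X)"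
  and runit_hom: "X \<in> Ob \<Longrightarrow> mRunit C X \<in> H (to X tunit) X"
  and runit_iso: "X \<in> Ob \<Longrightarrow> iso C (mRunit C X)"
  using monoidal unfolding is_moncat_def by simp_all

lemma arr_tm [simp]: "f \<in> Arr \<Longrightarrow> g \<in> Arr \<Longrightarrow> tm f g \<in> Arr"
  and dom_tm [simp]: "f \<in> Arr \<Longrightarrow> g \<in> Arr \<Longrightarrow> dm (tm f g) = to (dm f) (dm g)"
  and cod_tm [simp]: "f \<in> Arr \<Longrightarrow> g \<in> Arr \<Longrightarrow> cd (tm f g) = to (cd f) (cd g)"
  using tm_hom[OF arr_hom[of f] arr_hom[of g]] by (simp_all add: Hom_def)

lemma arr_al [simp]: "X \<in> Ob \<Longrightarrow> Y \<in> Ob \<Longrightarrow> Z \<in> Ob \<Longrightarrow> al X Y Z \<in> Arr"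
  and dom_al [simp]: "X \<in> Ob \<Longrightarrow> Y \<in> Ob \<Longrightarrow> Z \<in> Ob \<Longrightarrow> dm (al X Y Z) = to (to X Y) Z"
  and cod_al [simp]: "X \<in> Ob \<Longrightarrow> Y \<in> Ob \<Longrightarrow> Z \<in> Ob \<Longrightarrow> cd (al X Y Z) = to X (to Y Z)"
  using al_hom[of X Y Z] by (simp_all add: Hom_def)

lemma interchange_arr: "f \<in> Arr \<Longrightarrow> g \<in> Arr \<Longrightarrow> f' \<in> Arr \<Longrightarrow> g' \<in> Arr \<Longrightarrow>
    cd f = dm g \<Longrightarrow> cd f' = dm g' \<Longrightarrow> cmp (tm g g') (tm f f') = tm (cmp g f) (cmp g' f')"
  using interchange[OF arr_hom[of f] _ arr_hom[of f'], of g "cd g" g' "cd g'"] arr_hom[of g] arr_hom[of g']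
  by simp

lemma interchange_comp: "f \<in> Arr \<Longrightarrow> g \<in> Arr \<Longrightarrow> f' \<in> Arr \<Longrightarrow> g' \<in> Arr \<Longrightarrow> r \<in> Arr \<Longrightarrow>
    cd f = dm g \<Longrightarrow> cd f' = dm g' \<Longrightarrow> cd r = to (dm f) (dm f') \<Longrightarrow>
    cmp (tm g g') (cmp (tm f f') r) = cmp (tm (cmp g f) (cmp g' f')) r"
  by (subst comp_assoc_arr[symmetric]) (simp_all add: interchange_arr)

text \<open>Rewriting with these rules puts a composite of tensor products of arrows into the
  normal form: composition associated to the right, tensor factors merged, identities removed.\<close>

lemmas comp_normalize = comp_assoc_arr comp_id_left_arr comp_id_right_arr
  interchange_arr interchange_comp tm_id

lemma al_natural_arr: "f \<in> Arr \<Longrightarrow> g \<in> Arr \<Longrightarrow> h \<in> Arr \<Longrightarrow> r \<in> Arr \<Longrightarrow>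
    cd r = to (to (dm f) (dm g)) (dm h) \<Longrightarrow>
    cmp (tm f (tm g h)) (cmp (al (dm f) (dm g) (dm h)) r)
    = cmp (al (cd f) (cd g) (cd h)) (cmp (tm (tm f g) h) r)"
  by (simp add: comp_assoc_arr[symmetric] al_natural[OF arr_hom arr_hom arr_hom])

lemma al_natural_comp: "f \<in> Arr \<Longrightarrow> g \<in> Arr \<Longrightarrow> h \<in> Arr \<Longrightarrow> r \<in> Arr \<Longrightarrow>
    dm f = X \<Longrightarrow> dm g = Y \<Longrightarrow> dm h = Z \<Longrightarrow> cd r = to (to X Y) Z \<Longrightarrow>
    cmp (tm f (tm g h)) (cmp (al X Y Z) r) = cmp (al (cd f) (cd g) (cd h)) (cmp (tm (tm f g) h) r)"
  using al_natural_arr by blast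

lemma al_natural_comp': "f \<in> Arr \<Longrightarrow> g \<in> Arr \<Longrightarrow> h \<in> Arr \<Longrightarrow> r \<in> Arr \<Longrightarrow>
    dm f = X \<Longrightarrow> dm g = Y \<Longrightarrow> dm h = Z \<Longrightarrow> cd f = X' \<Longrightarrow> cd g = Y' \<Longrightarrow> cd h = Z' \<Longrightarrow>
    cd r = to (to X Y) Z \<Longrightarrow>
    cmp (al X' Y' Z') (cmp (tm (tm f g) h) r) = cmp (tm f (tm g h)) (cmp (al X Y Z) r)"
  using al_natural_arr[of f g h r] by simp

lemma pentagon_comp: "W \<in> Ob \<Longrightarrow> X \<in> Ob \<Longrightarrow> Y \<in> Ob \<Longrightarrow> Z \<in> Ob \<Longrightarrow> r \<in> Arr \<Longrightarrow>
    cd r = to (to (to W X) Y) Z \<Longrightarrow>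
    cmp (tm (idm W) (al X Y Z)) (cmp (al W (to X Y) Z) (cmp (tm (al W X Y) (idm Z)) r))
    = cmp (al W X (to Y Z)) (cmp (al (to W X) Y Z) r)"
proof -
  assume ob: "W \<in> Ob" "X \<in> Ob" "Y \<in> Ob" "Z \<in> Ob" and r: "r \<in> Arr" "cd r = to (to (to W X) Y) Z"
  have "cmp (tm (idm W) (al X Y Z)) (cmp (al W (to X Y) Z) (cmp (tm (al W X Y) (idm Z)) r))
      = cmp (cmp (tm (idm W) (al X Y Z)) (cmp (al W (to X Y) Z) (tm (al W X Y) (idm Z)))) r"
    using ob r by (simp add: comp_assoc_arr)
  also have "\<dots> = cmp (cmp (al W X (to Y Z)) (al (to W X) Y Z)) r"
    using ob by (simp add: pentagon)
  also have "\<dots> = cmp (al W X (to Y Z)) (cmp (al (to W X) Y Z) r)"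
    using ob r by (simp add: comp_assoc_arr)
  finally show ?thesis .
qed

end

locale linear_monoidal_category = monoidal_category D
  for D :: "('k::field, 'o, 'm, 'z) linmoncat_scheme" +
  assumes linear: "is_linmoncat D"
begin

abbreviation "add \<equiv> lAdd D"
abbreviation "zr \<equiv> lZero D"
abbreviation "ng \<equiv> lneg D"
abbreviation "ls \<equiv> lsum D"

lemmas hom_space = linear[unfolded is_linmoncat_def, THEN conjunct2, THEN conjunct1, THEN bspec, THEN bspec]
lemmas comp_bilinear = linear[unfolded is_linmoncat_def, THEN conjunct2, THEN conjunct2, THEN conjunct1,
    THEN bspec, THEN bspec, THEN bspec]
lemmas tm_bilinear = linear[unfolded is_linmoncat_def, THEN conjunct2, THEN conjunct2, THEN conjunct2,
    THEN bspec, THEN bspec, THEN bspec, THEN bspec]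

lemma zr_hom [intro, simp]: "X \<in> Ob \<Longrightarrow> Y \<in> Ob \<Longrightarrow> zr X Y \<in> H X Y"
  using hom_space by simp

lemma add_hom [intro, simp]: "f \<in> H X Y \<Longrightarrow> g \<in> H X Y \<Longrightarrow> add f g \<in> H X Y"
  using hom_space[of X Y] hom_obs[of f X Y] by simp

lemma ng_hom [intro, simp]: "f \<in> H X Y \<Longrightarrow> ng f \<in> H X Y"
  using hom_space[of X Y] hom_obs[of f X Y] unfolding lneg_def by simp

lemma add_ng [simp]: "f \<in> H X Y \<Longrightarrow> add f (ng f) = zr X Y"
  using hom_space[of X Y] hom_obs[of f X Y] unfolding lneg_def by simp

lemma add_assoc: "f \<in> H X Y \<Longrightarrow> g \<in> H X Y \<Longrightarrow> h \<in> H X Y \<Longrightarrow> add (add f g) h = add f (add g h)"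
  and add_commute: "f \<in> H X Y \<Longrightarrow> g \<in> H X Y \<Longrightarrow> add f g = add g f"
  and zero_add [simp]: "f \<in> H X Y \<Longrightarrow> add (zr X Y) f = f"
  by (metis hom_space hom_obs)+

lemma ng_add: "f \<in> H X Y \<Longrightarrow> g \<in> H X Y \<Longrightarrow> ng (add f g) = add (ng f) (ng g)"
  using hom_space[of X Y] hom_obs[of f X Y] unfolding lneg_def by simp

lemma ng_ng [simp]: "f \<in> H X Y \<Longrightarrow> ng (ng f) = f"
proof -
  assume f: "f \<in> H X Y"
  have "\<forall>c d. \<forall>f\<in>H X Y. lSmul D (c * d) f = lSmul D c (lSmul D d f)"
    and "\<forall>f\<in>H X Y. lSmul D 1 f = f"
    using hom_space[of X Y] hom_obs[OF f] by simp_all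
  then show ?thesis using f unfolding lneg_def by (metis mult_minus1 minus_minus)
qed

lemma add_zero [simp]: "f \<in> H X Y \<Longrightarrow> add f (zr X Y) = f"
  using add_commute zero_add hom_obs zr_hom by metis

lemma ng_add_self [simp]: "f \<in> H X Y \<Longrightarrow> add (ng f) f = zr X Y"
  using add_ng add_commute ng_hom hom_obs by metis

lemma idem_imp_zero: "x \<in> H X Y \<Longrightarrow> add x x = x \<Longrightarrow> x = zr X Y"
proof -
  assume x: "x \<in> H X Y" and idem: "add x x = x"
  have ob: "X \<in> Ob" "Y \<in> Ob" using x hom_obs by blast+
  have "zr X Y = add x (ng x)" using x ob by simp
  also have "\<dots> = add (add x x) (ng x)" using idem by simp
  also have "\<dots> = add x (add x (ng x))" using x ob by (blast intro: add_assoc)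
  also have "\<dots> = x" using x ob by simp
  finally show ?thesis by simp
qed

lemma ng_zr [simp]: "X \<in> Ob \<Longrightarrow> Y \<in> Ob \<Longrightarrow> ng (zr X Y) = zr X Y"
  by (metis zero_add add_ng ng_hom zr_hom)

lemma comp_add_right: "g \<in> H Y Z \<Longrightarrow> f \<in> H X Y \<Longrightarrow> f' \<in> H X Y \<Longrightarrow>
    cmp g (add f f') = add (cmp g f) (cmp g f')"
  using comp_bilinear[of X Y Z] hom_obs[of f X Y] hom_obs[of g Y Z] by simp

lemma comp_add_left: "g \<in> H Y Z \<Longrightarrow> g' \<in> H Y Z \<Longrightarrow> f \<in> H X Y \<Longrightarrow>
    cmp (add g g') f = add (cmp g f) (cmp g' f)"
  using comp_bilinear[of X Y Z] hom_obs[of f X Y] hom_obs[of g Y Z] by simp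

lemma tm_add_left: "f \<in> H X Y \<Longrightarrow> f' \<in> H X Y \<Longrightarrow> g \<in> H X' Y' \<Longrightarrow>
    tm (add f f') g = add (tm f g) (tm f' g)"
  using tm_bilinear[of X Y X' Y'] hom_obs[of f X Y] hom_obs[of g X' Y'] by simp

lemma tm_add_right: "f \<in> H X Y \<Longrightarrow> g \<in> H X' Y' \<Longrightarrow> g' \<in> H X' Y' \<Longrightarrow>
    tm f (add g g') = add (tm f g) (tm f g')"
  using tm_bilinear[of X Y X' Y'] hom_obs[of f X Y] hom_obs[of g X' Y'] by simp

lemma add_eq_zero_imp_ng: "a \<in> H X Y \<Longrightarrow> b \<in> H X Y \<Longrightarrow> add a b = zr X Y \<Longrightarrow> b = ng a"
proof -
  assume a: "a \<in> H X Y" and b: "b \<in> H X Y" and ab: "add a b = zr X Y"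
  have "b = add (add (ng a) a) b" using a b by simp
  also have "\<dots> = add (ng a) (add a b)" using add_assoc[OF ng_hom[OF a] a b] .
  also have "\<dots> = ng a" using a ab by simp
  finally show ?thesis .
qed

lemma add_right_commute: "a \<in> H X Y \<Longrightarrow> b \<in> H X Y \<Longrightarrow> c \<in> H X Y \<Longrightarrow>
    add (add a b) c = add (add a c) b"
  by (simp add: add_assoc[where X = X and Y = Y] add_commute[of b X Y c])

lemma add_add_swap: "a \<in> H X Y \<Longrightarrow> b \<in> H X Y \<Longrightarrow> c \<in> H X Y \<Longrightarrow> d \<in> H X Y \<Longrightarrow>
    add (add a b) (add c d) = add (add a c) (add b d)"
  by (simp add: add_assoc[where X = X and Y = Y, symmetric] add_right_commute[where X = X and Y = Y])

lemma ng_diff: "a \<in> H X Y \<Longrightarrow> b \<in> H X Y \<Longrightarrow> ng (add a (ng b)) = add b (ng a)"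
  using ng_add[of a X Y "ng b"] add_commute[of "ng a" X Y b] by simp

lemma add_diff_telescope: "a \<in> H X Y \<Longrightarrow> b \<in> H X Y \<Longrightarrow> c \<in> H X Y \<Longrightarrow>
    add (add a (ng b)) (add b (ng c)) = add a (ng c)"
proof -
  assume h: "a \<in> H X Y" "b \<in> H X Y" "c \<in> H X Y"
  have "add (add a (ng b)) (add b (ng c)) = add a (add (ng b) (add b (ng c)))"
    using h by (simp add: add_assoc[where X = X and Y = Y])
  also have "add (ng b) (add b (ng c)) = add (add (ng b) b) (ng c)"
    using add_assoc[OF ng_hom[OF h(2)] h(2) ng_hom[OF h(3)]] by simp
  also have "\<dots> = ng c"
    using h by simp
  finally show ?thesis .
qed

definition alt5 :: "'m \<Rightarrow> 'm \<Rightarrow> 'm \<Rightarrow> 'm \<Rightarrow> 'm \<Rightarrow> 'm" where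
  "alt5 x0 x1 x2 x3 x4 = add (add (add (add x0 (ng x1)) x2) (ng x3)) x4"

lemma alt5_hom [simp]: "x0 \<in> H X Y \<Longrightarrow> x1 \<in> H X Y \<Longrightarrow> x2 \<in> H X Y \<Longrightarrow> x3 \<in> H X Y \<Longrightarrow> x4 \<in> H X Y \<Longrightarrow>
    alt5 x0 x1 x2 x3 x4 \<in> H X Y"
  unfolding alt5_def by simp

lemma five_differences_cancel:
  assumes h: "y1 \<in> H X Y" "y2 \<in> H X Y" "y3 \<in> H X Y" "y4 \<in> H X Y" "y5 \<in> H X Y"
  shows "alt5 (add y1 (ng y5)) (add y4 (ng y2)) (add y3 (ng y1)) (add y2 (ng y5)) (add y4 (ng y3)) = zr X Y"
proof -
  let ?d = "\<lambda>a b. add a (ng b)"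
  have "alt5 (?d y1 y5) (?d y4 y2) (?d y3 y1) (?d y2 y5) (?d y4 y3)
     = add (add (add (add (?d y1 y5) (?d y2 y4)) (?d y3 y1)) (?d y5 y2)) (?d y4 y3)"
    unfolding alt5_def using h by (simp add: ng_diff[where X = X and Y = Y])
  also have "\<dots> = add (add (add (add (?d y1 y5) (?d y2 y4)) (?d y5 y2)) (?d y3 y1)) (?d y4 y3)"
    using h by (simp add: add_right_commute[where X = X and Y = Y, of _ "?d y3 y1"])
  also have "\<dots> = add (add (add (add (?d y1 y5) (?d y5 y2)) (?d y2 y4)) (?d y3 y1)) (?d y4 y3)"
    using h by (simp add: add_right_commute[where X = X and Y = Y, of _ "?d y2 y4"])
  also have "\<dots> = add (add (add (add (?d y1 y5) (?d y5 y2)) (?d y2 y4)) (?d y4 y3)) (?d y3 y1)"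
    using h by (simp add: add_right_commute[where X = X and Y = Y, of _ "?d y3 y1"])
  also have "\<dots> = ?d y1 y1"
    using h by (simp add: add_diff_telescope[where X = X and Y = Y])
  finally show ?thesis using h by simp
qed

lemma lsum_hom [intro]: "X \<in> Ob \<Longrightarrow> Y \<in> Ob \<Longrightarrow> (\<And>i. i < m \<Longrightarrow> f i \<in> H X Y) \<Longrightarrow> ls X Y f m \<in> H X Y"
  by (induction m) auto

lemma lsum_cong: "(\<And>i. i < m \<Longrightarrow> f i = g i) \<Longrightarrow> ls X Y f m = ls X Y g m"
  by (induction m) auto

lemma lsum_zero: "(\<And>i. i < m \<Longrightarrow> f i = zr X Y) \<Longrightarrow> X \<in> Ob \<Longrightarrow> Y \<in> Ob \<Longrightarrow> ls X Y f m = zr X Y"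
  by (induction m) auto

lemma lsum_add: "X \<in> Ob \<Longrightarrow> Y \<in> Ob \<Longrightarrow> (\<And>i. i < m \<Longrightarrow> f i \<in> H X Y) \<Longrightarrow> (\<And>i. i < m \<Longrightarrow> g i \<in> H X Y) \<Longrightarrow>
    ls X Y (\<lambda>i. add (f i) (g i)) m = add (ls X Y f m) (ls X Y g m)"
proof (induction m)
  case (Suc m)
  then show ?case by (simp add: add_add_swap[where X = X and Y = Y] lsum_hom)
qed simp

lemma lsum_shift: "X \<in> Ob \<Longrightarrow> Y \<in> Ob \<Longrightarrow> (\<And>i. i < Suc m \<Longrightarrow> f i \<in> H X Y) \<Longrightarrow>
    ls X Y f (Suc m) = add (f 0) (ls X Y (\<lambda>i. f (Suc i)) m)"
proof (induction m)
  case 0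
  then show ?case by (simp add: add_commute)
next
  case (Suc m)
  then show ?case by (simp add: add_assoc[where X = X and Y = Y] lsum_hom)
qed

lemma lsum_reflect: "X \<in> Ob \<Longrightarrow> Y \<in> Ob \<Longrightarrow> (\<And>i. i < m \<Longrightarrow> f i \<in> H X Y) \<Longrightarrow>
    ls X Y (\<lambda>i. f (m - Suc i)) m = ls X Y f m"
proof (induction m arbitrary: f)
  case (Suc m)
  have "ls X Y (\<lambda>i. f (Suc m - Suc i)) (Suc m) = add (f m) (ls X Y (\<lambda>i. f (m - Suc i)) m)"
    by (subst lsum_shift) (use Suc in auto)
  also have "\<dots> = add (f m) (ls X Y f m)"
    using Suc by simp
  also have "\<dots> = ls X Y f (Suc m)"
    using Suc add_commute[of "f m" X Y "ls X Y f m"] by (simp add: lsum_hom)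
  finally show ?case .
qed simp

lemma lsum_extend: "X \<in> Ob \<Longrightarrow> Y \<in> Ob \<Longrightarrow> m \<le> M \<Longrightarrow> (\<And>i. i < m \<Longrightarrow> f i \<in> H X Y) \<Longrightarrow>
    (\<And>i. m \<le> i \<Longrightarrow> i < M \<Longrightarrow> f i = zr X Y) \<Longrightarrow> ls X Y f M = ls X Y f m"
proof (induction M)
  case (Suc M)
  then show ?case by (cases "m = Suc M") (simp_all add: lsum_hom)
qed simp

lemma lsum_single: "X \<in> Ob \<Longrightarrow> Y \<in> Ob \<Longrightarrow> c < m \<Longrightarrow> f c \<in> H X Y \<Longrightarrow>
    (\<And>i. i < m \<Longrightarrow> i \<noteq> c \<Longrightarrow> f i = zr X Y) \<Longrightarrow> ls X Y f m = f c"
proof (induction m)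
  case (Suc m)
  show ?case
  proof (cases "c = m")
    case True
    then have "ls X Y f m = zr X Y" using Suc by (intro lsum_zero) auto
    then show ?thesis using True Suc by simp
  next
    case False
    then show ?thesis using Suc by simp
  qed
qed simp

lemma lsum_swap: "X \<in> Ob \<Longrightarrow> Y \<in> Ob \<Longrightarrow> (\<And>i j. i < m1 \<Longrightarrow> j < m2 \<Longrightarrow> f i j \<in> H X Y) \<Longrightarrow>
    ls X Y (\<lambda>i. ls X Y (\<lambda>j. f i j) m2) m1 = ls X Y (\<lambda>j. ls X Y (\<lambda>i. f i j) m1) m2"
proof (induction m1)
  case 0
  then show ?case by (simp add: lsum_zero)
next
  case (Suc m1)
  have "ls X Y (\<lambda>i. ls X Y (\<lambda>j. f i j) m2) (Suc m1)
     = add (ls X Y (\<lambda>j. ls X Y (\<lambda>i. f i j) m1) m2) (ls X Y (\<lambda>j. f m1 j) m2)"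
    using Suc by simp
  also have "\<dots> = ls X Y (\<lambda>j. add (ls X Y (\<lambda>i. f i j) m1) (f m1 j)) m2"
    by (rule lsum_add[symmetric]) (use Suc in auto)
  finally show ?case by simp
qed

lemma lsum_antidiagonal_interior:
  assumes ob: "X \<in> Ob" "Y \<in> Ob" and h: "\<And>b c. h b c \<in> H X Y"
    and h0: "h 0 (Suc N) = zr X Y" and h1: "h (Suc N) 0 = zr X Y"
  shows "ls X Y (\<lambda>b. h b (Suc N - b)) (Suc (Suc N)) = ls X Y (\<lambda>i. h (N - i) (Suc i)) N"
proof -
  have "ls X Y (\<lambda>b. h b (Suc N - b)) (Suc (Suc N)) = ls X Y (\<lambda>b. h b (Suc N - b)) (Suc N)"
    by (simp only: lsum.simps(2)) (use h1 h ob in \<open>simp add: lsum_hom del: lsum.simps\<close>)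
  also have "\<dots> = add (h 0 (Suc N)) (ls X Y (\<lambda>i. h (Suc i) (N - i)) N)"
    by (subst lsum_shift) (use ob h in simp_all)
  also have "\<dots> = ls X Y (\<lambda>i. h (Suc i) (N - i)) N"
    using h0 h ob by (simp add: lsum_hom del: lsum.simps)
  also have "\<dots> = ls X Y (\<lambda>i. h (Suc (N - Suc i)) (N - (N - Suc i))) N"
    by (rule lsum_reflect[where f = "\<lambda>j. h (Suc j) (N - j)", symmetric]) (use ob h in simp_all)
  also have "\<dots> = ls X Y (\<lambda>i. h (N - i) (Suc i)) N"
    by (rule lsum_cong) (simp add: Suc_diff_Suc)
  finally show ?thesis .
qed

definition additive :: "('m \<Rightarrow> 'm) \<Rightarrow> 'o \<Rightarrow> 'o \<Rightarrow> 'o \<Rightarrow> 'o \<Rightarrow> bool" where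
  "additive L X Y X' Y' \<longleftrightarrow> X \<in> Ob \<and> Y \<in> Ob \<and> X' \<in> Ob \<and> Y' \<in> Ob \<and>
     (\<forall>x\<in>H X Y. L x \<in> H X' Y') \<and> (\<forall>x\<in>H X Y. \<forall>y\<in>H X Y. L (add x y) = add (L x) (L y))"

lemma additive_hom: "additive L X Y X' Y' \<Longrightarrow> x \<in> H X Y \<Longrightarrow> L x \<in> H X' Y'"
  and additive_add: "additive L X Y X' Y' \<Longrightarrow> x \<in> H X Y \<Longrightarrow> y \<in> H X Y \<Longrightarrow> L (add x y) = add (L x) (L y)"
  unfolding additive_def by blast+

lemma additive_zr: "additive L X Y X' Y' \<Longrightarrow> L (zr X Y) = zr X' Y'"
proof -
  assume L: "additive L X Y X' Y'"
  then have ob: "X \<in> Ob" "Y \<in> Ob" unfolding additive_def by blast+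
  have "add (L (zr X Y)) (L (zr X Y)) = L (zr X Y)"
    using additive_add[OF L, of "zr X Y" "zr X Y"] ob by simp
  then show ?thesis using additive_hom[OF L] ob by (blast intro: idem_imp_zero)
qed

lemma additive_ng: "additive L X Y X' Y' \<Longrightarrow> x \<in> H X Y \<Longrightarrow> L (ng x) = ng (L x)"
proof -
  assume L: "additive L X Y X' Y'" and x: "x \<in> H X Y"
  have "add (L x) (L (ng x)) = zr X' Y'"
    using additive_add[OF L x ng_hom[OF x]] additive_zr[OF L] x by simp
  then show ?thesis using additive_hom[OF L] x by (blast intro: add_eq_zero_imp_ng)
qed

lemma additive_lsum: "additive L X Y X' Y' \<Longrightarrow> (\<And>i. i < m \<Longrightarrow> f i \<in> H X Y) \<Longrightarrow>
    L (ls X Y f m) = ls X' Y' (\<lambda>i. L (f i)) m"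
  by (induction m) (auto simp: additive_zr additive_add[where X = X and Y = Y] lsum_hom additive_def)

lemma additive_lsum_diff: "additive L X Y X' Y' \<Longrightarrow>
    (\<And>i. i < m \<Longrightarrow> p i \<in> H X Y) \<Longrightarrow> (\<And>i. i < m \<Longrightarrow> q i \<in> H X Y) \<Longrightarrow>
    L (ls X Y (\<lambda>i. add (p i) (ng (q i))) m) = ls X' Y' (\<lambda>i. add (L (p i)) (ng (L (q i)))) m"
  by (subst additive_lsum[where X = X and Y = Y])
    (auto simp: additive_add[where X = X and Y = Y] additive_ng[where X = X and Y = Y] intro!: lsum_cong)

lemma additive_compose: "additive L1 X Y X' Y' \<Longrightarrow> additive L2 X' Y' X'' Y'' \<Longrightarrow>
    additive (\<lambda>x. L2 (L1 x)) X Y X'' Y''"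
  unfolding additive_def by auto

lemma additive_ng_map: "X \<in> Ob \<Longrightarrow> Y \<in> Ob \<Longrightarrow> additive ng X Y X Y"
  unfolding additive_def by (simp add: ng_add)

lemma additive_postcomp: "g \<in> H Y Z \<Longrightarrow> X \<in> Ob \<Longrightarrow> additive (\<lambda>x. cmp g x) X Y X Z"
  and additive_precomp: "h \<in> H X Y \<Longrightarrow> Z \<in> Ob \<Longrightarrow> additive (\<lambda>x. cmp x h) Y Z X Z"
  and additive_tm_left: "g \<in> H X' Y' \<Longrightarrow> X \<in> Ob \<Longrightarrow> Y \<in> Ob \<Longrightarrow>
    additive (\<lambda>x. tm x g) X Y (to X X') (to Y Y')"
  and additive_tm_right: "g \<in> H X Y \<Longrightarrow> X' \<in> Ob \<Longrightarrow> Y' \<in> Ob \<Longrightarrow>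
    additive (\<lambda>x. tm g x) X' Y' (to X X') (to Y Y')"
  unfolding additive_def using hom_obs
  by (auto simp: comp_add_right comp_add_left tm_add_left tm_add_right)

lemma lsum_ng: "X \<in> Ob \<Longrightarrow> Y \<in> Ob \<Longrightarrow> (\<And>i. i < m \<Longrightarrow> f i \<in> H X Y) \<Longrightarrow>
    ls X Y (\<lambda>i. ng (f i)) m = ng (ls X Y f m)"
  using additive_lsum[OF additive_ng_map] by metis

lemma lsum_diff: "X \<in> Ob \<Longrightarrow> Y \<in> Ob \<Longrightarrow> (\<And>i. i < m \<Longrightarrow> f i \<in> H X Y) \<Longrightarrow> (\<And>i. i < m \<Longrightarrow> g i \<in> H X Y) \<Longrightarrow>
    ls X Y (\<lambda>i. add (f i) (ng (g i))) m = add (ls X Y f m) (ng (ls X Y g m))"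
  by (simp add: lsum_add lsum_ng del: lsum.simps)

lemma lsum_alt5: "X \<in> Ob \<Longrightarrow> Y \<in> Ob \<Longrightarrow>
    (\<And>i. i < m \<Longrightarrow> f0 i \<in> H X Y) \<Longrightarrow> (\<And>i. i < m \<Longrightarrow> f1 i \<in> H X Y) \<Longrightarrow> (\<And>i. i < m \<Longrightarrow> f2 i \<in> H X Y) \<Longrightarrow>
    (\<And>i. i < m \<Longrightarrow> f3 i \<in> H X Y) \<Longrightarrow> (\<And>i. i < m \<Longrightarrow> f4 i \<in> H X Y) \<Longrightarrow>
    ls X Y (\<lambda>i. alt5 (f0 i) (f1 i) (f2 i) (f3 i) (f4 i)) m
    = alt5 (ls X Y f0 m) (ls X Y f1 m) (ls X Y f2 m) (ls X Y f3 m) (ls X Y f4 m)"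
  unfolding alt5_def by (simp add: lsum_add lsum_ng lsum_hom del: lsum.simps)

lemma comp_zr_left [simp]: "f \<in> H X Y \<Longrightarrow> Z \<in> Ob \<Longrightarrow> cmp (zr Y Z) f = zr X Z"
  and comp_zr_right [simp]: "g \<in> H Y Z \<Longrightarrow> X \<in> Ob \<Longrightarrow> cmp g (zr X Y) = zr X Z"
  and tm_zr_left [simp]: "g \<in> H X' Y' \<Longrightarrow> X \<in> Ob \<Longrightarrow> Y \<in> Ob \<Longrightarrow> tm (zr X Y) g = zr (to X X') (to Y Y')"
  and tm_zr_right [simp]: "f \<in> H X Y \<Longrightarrow> X' \<in> Ob \<Longrightarrow> Y' \<in> Ob \<Longrightarrow> tm f (zr X' Y') = zr (to X X') (to Y Y')"
  using additive_zr[OF additive_precomp[of f X Y Z]] additive_zr[OF additive_postcomp[of g Y Z X]]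
    additive_zr[OF additive_tm_left[of g X' Y' X Y]] additive_zr[OF additive_tm_right[of f X Y X' Y']]
  by simp_all

lemma zr_arr [simp]: "X \<in> Ob \<Longrightarrow> Y \<in> Ob \<Longrightarrow> zr X Y \<in> Arr"
  and dom_zr [simp]: "X \<in> Ob \<Longrightarrow> Y \<in> Ob \<Longrightarrow> dm (zr X Y) = X"
  and cod_zr [simp]: "X \<in> Ob \<Longrightarrow> Y \<in> Ob \<Longrightarrow> cd (zr X Y) = Y"
  using zr_hom[of X Y] by (simp_all add: Hom_def)

lemma comp_zr_left_arr [simp]: "f \<in> Arr \<Longrightarrow> cd f = Y \<Longrightarrow> Z \<in> Ob \<Longrightarrow> cmp (zr Y Z) f = zr (dm f) Z"
  and comp_zr_right_arr [simp]: "g \<in> Arr \<Longrightarrow> dm g = Y \<Longrightarrow> X \<in> Ob \<Longrightarrow> cmp g (zr X Y) = zr X (cd g)"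
  and tm_zr_left_arr [simp]: "g \<in> Arr \<Longrightarrow> X \<in> Ob \<Longrightarrow> Y \<in> Ob \<Longrightarrow> tm (zr X Y) g = zr (to X (dm g)) (to Y (cd g))"
  and tm_zr_right_arr [simp]: "f \<in> Arr \<Longrightarrow> X \<in> Ob \<Longrightarrow> Y \<in> Ob \<Longrightarrow> tm f (zr X Y) = zr (to (dm f) X) (to (cd f) Y)"
  using arr_hom[of f] arr_hom[of g] by auto

definition conv3 :: "'o \<Rightarrow> 'o \<Rightarrow> nat \<Rightarrow> (nat \<Rightarrow> nat \<Rightarrow> nat \<Rightarrow> 'm) \<Rightarrow> 'm" where
  "conv3 X Y N f = ls X Y (\<lambda>a. ls X Y (\<lambda>b. ls X Y (\<lambda>c.
     if a + b + c = N then f a b c else zr X Y) (Suc N)) (Suc N)) (Suc N)"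

lemma conv3_eq_lsum: "X \<in> Ob \<Longrightarrow> Y \<in> Ob \<Longrightarrow> (\<And>a b c. f a b c \<in> H X Y) \<Longrightarrow>
    conv3 X Y N f = ls X Y (\<lambda>a. ls X Y (\<lambda>b. f a b (N - a - b)) (Suc (N - a))) (Suc N)"
  unfolding conv3_def
proof (rule lsum_cong)
  fix a assume a: "a < Suc N" and ob: "X \<in> Ob" "Y \<in> Ob" and f: "\<And>a b c. f a b c \<in> H X Y"
  have inner: "ls X Y (\<lambda>c. if a + b + c = N then f a b c else zr X Y) (Suc N)
      = (if a + b \<le> N then f a b (N - a - b) else zr X Y)" for b
  proof (cases "a + b \<le> N")
    case True
    have "ls X Y (\<lambda>c. if a + b + c = N then f a b c else zr X Y) (Suc N)
       = (if a + b + (N - a - b) = N then f a b (N - a - b) else zr X Y)"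
      by (rule lsum_single) (use True ob f in auto)
    then show ?thesis using True by simp
  next
    case False
    then show ?thesis using ob by (simp add: lsum_zero)
  qed
  have "ls X Y (\<lambda>b. ls X Y (\<lambda>c. if a + b + c = N then f a b c else zr X Y) (Suc N)) (Suc N)
     = ls X Y (\<lambda>b. if a + b \<le> N then f a b (N - a - b) else zr X Y) (Suc (N - a))"
    unfolding inner by (rule lsum_extend) (use a ob f in auto)
  also have "\<dots> = ls X Y (\<lambda>b. f a b (N - a - b)) (Suc (N - a))"
    by (rule lsum_cong) (use a in auto)
  finally show "ls X Y (\<lambda>b. ls X Y (\<lambda>c. if a + b + c = N then f a b c else zr X Y) (Suc N)) (Suc N)
     = ls X Y (\<lambda>b. f a b (N - a - b)) (Suc (N - a))" .
qed

lemma conv3_hom: "X \<in> Ob \<Longrightarrow> Y \<in> Ob \<Longrightarrow> (\<And>a b c. f a b c \<in> H X Y) \<Longrightarrow> conv3 X Y N f \<in> H X Y"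
  unfolding conv3_def by (intro lsum_hom) auto

lemma conv3_add: "X \<in> Ob \<Longrightarrow> Y \<in> Ob \<Longrightarrow> (\<And>a b c. f a b c \<in> H X Y) \<Longrightarrow> (\<And>a b c. g a b c \<in> H X Y) \<Longrightarrow>
    conv3 X Y N (\<lambda>a b c. add (f a b c) (g a b c)) = add (conv3 X Y N f) (conv3 X Y N g)"
proof -
  assume ob: "X \<in> Ob" "Y \<in> Ob" and f: "\<And>a b c. f a b c \<in> H X Y" and g: "\<And>a b c. g a b c \<in> H X Y"
  have split: "(if P then add u v else zr X Y) = add (if P then u else zr X Y) (if P then v else zr X Y)"
    for P u v
    using ob by simp
  show ?thesis
    unfolding conv3_def split using ob f g by (simp add: lsum_add lsum_hom del: lsum.simps)
qed

lemma conv3_ng: "X \<in> Ob \<Longrightarrow> Y \<in> Ob \<Longrightarrow> (\<And>a b c. f a b c \<in> H X Y) \<Longrightarrow>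
    conv3 X Y N (\<lambda>a b c. ng (f a b c)) = ng (conv3 X Y N f)"
proof -
  assume ob: "X \<in> Ob" "Y \<in> Ob" and f: "\<And>a b c. f a b c \<in> H X Y"
  have split: "(if P then ng u else zr X Y) = ng (if P then u else zr X Y)" for P u
    using ob by simp
  show ?thesis
    unfolding conv3_def split using ob f by (simp add: lsum_ng lsum_hom del: lsum.simps)
qed

lemma conv3_diff: "X \<in> Ob \<Longrightarrow> Y \<in> Ob \<Longrightarrow> (\<And>a b c. f a b c \<in> H X Y) \<Longrightarrow> (\<And>a b c. g a b c \<in> H X Y) \<Longrightarrow>
    conv3 X Y N (\<lambda>a b c. add (f a b c) (ng (g a b c))) = add (conv3 X Y N f) (ng (conv3 X Y N g))"
  by (simp add: conv3_add conv3_ng)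

lemma conv3_alt5: "X \<in> Ob \<Longrightarrow> Y \<in> Ob \<Longrightarrow>
    (\<And>a b c. f0 a b c \<in> H X Y) \<Longrightarrow> (\<And>a b c. f1 a b c \<in> H X Y) \<Longrightarrow> (\<And>a b c. f2 a b c \<in> H X Y) \<Longrightarrow>
    (\<And>a b c. f3 a b c \<in> H X Y) \<Longrightarrow> (\<And>a b c. f4 a b c \<in> H X Y) \<Longrightarrow>
    conv3 X Y N (\<lambda>a b c. alt5 (f0 a b c) (f1 a b c) (f2 a b c) (f3 a b c) (f4 a b c))
    = alt5 (conv3 X Y N f0) (conv3 X Y N f1) (conv3 X Y N f2) (conv3 X Y N f3) (conv3 X Y N f4)"
  unfolding alt5_def by (simp add: conv3_add conv3_ng)

lemma conv3_rotate: "X \<in> Ob \<Longrightarrow> Y \<in> Ob \<Longrightarrow> (\<And>a b c. f a b c \<in> H X Y) \<Longrightarrow>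
    conv3 X Y N (\<lambda>a b c. f b c a) = conv3 X Y N f"
proof -
  assume ob: "X \<in> Ob" "Y \<in> Ob" and f: "\<And>a b c. f a b c \<in> H X Y"
  have "conv3 X Y N (\<lambda>a b c. f b c a) = ls X Y (\<lambda>b. ls X Y (\<lambda>a. ls X Y (\<lambda>c.
      if a + b + c = N then f b c a else zr X Y) (Suc N)) (Suc N)) (Suc N)"
    unfolding conv3_def by (rule lsum_swap) (use ob f in \<open>auto intro!: lsum_hom\<close>)
  also have "\<dots> = ls X Y (\<lambda>b. ls X Y (\<lambda>c. ls X Y (\<lambda>a.
      if a + b + c = N then f b c a else zr X Y) (Suc N)) (Suc N)) (Suc N)"
    by (rule lsum_cong, rule lsum_swap) (use ob f in auto)
  also have "\<dots> = conv3 X Y N f"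
    unfolding conv3_def by (intro lsum_cong) (simp add: ac_simps)
  finally show ?thesis .
qed

lemma conv3_swap: "X \<in> Ob \<Longrightarrow> Y \<in> Ob \<Longrightarrow> (\<And>a b c. f a b c \<in> H X Y) \<Longrightarrow>
    conv3 X Y N (\<lambda>a b c. f b a c) = conv3 X Y N f"
proof -
  assume ob: "X \<in> Ob" "Y \<in> Ob" and f: "\<And>a b c. f a b c \<in> H X Y"
  have "conv3 X Y N (\<lambda>a b c. f b a c) = ls X Y (\<lambda>b. ls X Y (\<lambda>a. ls X Y (\<lambda>c.
      if a + b + c = N then f b a c else zr X Y) (Suc N)) (Suc N)) (Suc N)"
    unfolding conv3_def by (rule lsum_swap) (use ob f in \<open>auto intro!: lsum_hom\<close>)
  also have "\<dots> = conv3 X Y N f"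
    unfolding conv3_def by (intro lsum_cong) (simp add: ac_simps)
  finally show ?thesis .
qed

section \<open>Coefficient sequences in the trivial deformation\<close>

definition coeffs_in :: "(nat \<Rightarrow> 'm) \<Rightarrow> 'o \<Rightarrow> 'o \<Rightarrow> bool" where
  "coeffs_in p X Y \<longleftrightarrow> (\<forall>k. p k \<in> H X Y)"

lemma coeffs_inD: "coeffs_in p X Y \<Longrightarrow> p k \<in> H X Y"
  by (simp add: coeffs_in_def)

lemma tdef_comp_coeff: "coeffs_in p X Y \<Longrightarrow> coeffs_in q Y Z \<Longrightarrow> k \<le> N \<Longrightarrow>
    cComp (tdef D N) q p k = ls X Z (\<lambda>i. cmp (q i) (p (k - i))) (Suc k)"
  using hom_dom[OF coeffs_inD[of p X Y 0]] hom_cod[OF coeffs_inD[of q Y Z 0]]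
  by (simp add: tdef_def)

lemma coeffs_in_tdef_comp: "coeffs_in p X Y \<Longrightarrow> coeffs_in q Y Z \<Longrightarrow> coeffs_in (cComp (tdef D N) q p) X Z"
  unfolding coeffs_in_def
proof
  fix k assume p: "\<forall>k. p k \<in> H X Y" and q: "\<forall>k. q k \<in> H Y Z"
  have ob: "X \<in> Ob" "Y \<in> Ob" "Z \<in> Ob" using p q hom_obs by blast+
  show "cComp (tdef D N) q p k \<in> H X Z"
    using hom_dom[OF p[rule_format, of 0]] hom_cod[OF q[rule_format, of 0]] p q ob
    by (auto simp: tdef_def intro!: lsum_hom)
qed

lemma tdef_tm_coeff: "coeffs_in p X Y \<Longrightarrow> coeffs_in q X' Y' \<Longrightarrow> k \<le> N \<Longrightarrow>
    mTm (tdef D N) p q k = ls (to X X') (to Y Y') (\<lambda>i. tm (p i) (q (k - i))) (Suc k)"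
  using hom_dom[OF coeffs_inD[of p X Y 0]] hom_cod[OF coeffs_inD[of p X Y 0]]
    hom_dom[OF coeffs_inD[of q X' Y' 0]] hom_cod[OF coeffs_inD[of q X' Y' 0]]
  by (simp add: tdef_def)

lemma coeffs_in_tdef_tm: "coeffs_in p X Y \<Longrightarrow> coeffs_in q X' Y' \<Longrightarrow>
    coeffs_in (mTm (tdef D N) p q) (to X X') (to Y Y')"
  unfolding coeffs_in_def
proof
  fix k assume p: "\<forall>k. p k \<in> H X Y" and q: "\<forall>k. q k \<in> H X' Y'"
  have ob: "X \<in> Ob" "Y \<in> Ob" "X' \<in> Ob" "Y' \<in> Ob" using p q hom_obs by blast+
  have "tm (p i) (q j) \<in> H (to X X') (to Y Y')" for i j
    using p q by blast
  then show "mTm (tdef D N) p q k \<in> H (to X X') (to Y Y')"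
    using hom_dom[OF p[rule_format, of 0]] hom_cod[OF p[rule_format, of 0]]
      hom_dom[OF q[rule_format, of 0]] hom_cod[OF q[rule_format, of 0]] ob
    by (simp add: tdef_def lsum_hom del: lsum.simps)
qed

lemma tdef_structure [simp]:
  "cId (tdef D N) X = pconst D N (idm X)"
  "mTo (tdef D N) = to"
  "mUnit (tdef D N) = tunit"
  "mAssoc (tdef D N) X Y Z = pconst D N (al X Y Z)"
  "mLunit (tdef D N) X = pconst D N (mLunit D X)"
  "mRunit (tdef D N) X = pconst D N (mRunit D X)"
  by (simp_all add: tdef_def)

lemma pconst_0 [simp]: "pconst D N f 0 = f"
  by (simp add: pconst_def)

lemma pconst_pos: "f \<in> H X Y \<Longrightarrow> 0 < k \<Longrightarrow> pconst D N f k = zr X Y"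
  by (simp add: pconst_def hom_dom hom_cod)

lemma coeffs_in_pconst: "f \<in> H X Y \<Longrightarrow> coeffs_in (pconst D N f) X Y"
  unfolding coeffs_in_def using hom_obs by (auto simp: pconst_def hom_dom hom_cod)

lemma tdef_comp_pconst_left: "g \<in> H Y Z \<Longrightarrow> coeffs_in p X Y \<Longrightarrow> k \<le> N \<Longrightarrow>
    cComp (tdef D N) (pconst D N g) p k = cmp g (p k)"
proof -
  assume g: "g \<in> H Y Z" and p: "coeffs_in p X Y" and k: "k \<le> N"
  have ob: "X \<in> Ob" "Z \<in> Ob" using hom_obs[OF coeffs_inD[OF p]] hom_obs[OF g] by blast+
  have "cComp (tdef D N) (pconst D N g) p k = ls X Z (\<lambda>i. cmp (pconst D N g i) (p (k - i))) (Suc k)"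
    by (rule tdef_comp_coeff[OF p coeffs_in_pconst[OF g] k])
  also have "\<dots> = cmp (pconst D N g 0) (p (k - 0))"
    by (rule lsum_single) (use g coeffs_inD[OF p] ob in \<open>auto simp: pconst_pos\<close>)
  finally show ?thesis by simp
qed

lemma tdef_comp_pconst_right: "f \<in> H X Y \<Longrightarrow> coeffs_in q Y Z \<Longrightarrow> k \<le> N \<Longrightarrow>
    cComp (tdef D N) q (pconst D N f) k = cmp (q k) f"
proof -
  assume f: "f \<in> H X Y" and q: "coeffs_in q Y Z" and k: "k \<le> N"
  have ob: "X \<in> Ob" "Z \<in> Ob" using hom_obs[OF coeffs_inD[OF q]] hom_obs[OF f] by blast+
  have "cComp (tdef D N) q (pconst D N f) k = ls X Z (\<lambda>i. cmp (q i) (pconst D N f (k - i))) (Suc k)"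
    by (rule tdef_comp_coeff[OF coeffs_in_pconst[OF f] q k])
  also have "\<dots> = cmp (q k) (pconst D N f (k - k))"
    by (rule lsum_single) (use f coeffs_inD[OF q] ob in \<open>auto simp: pconst_pos\<close>)
  finally show ?thesis by simp
qed

lemma tdef_tm_pconst_left: "f \<in> H X Y \<Longrightarrow> coeffs_in q X' Y' \<Longrightarrow> k \<le> N \<Longrightarrow>
    mTm (tdef D N) (pconst D N f) q k = tm f (q k)"
proof -
  assume f: "f \<in> H X Y" and q: "coeffs_in q X' Y'" and k: "k \<le> N"
  have ob: "X \<in> Ob" "Y \<in> Ob" "X' \<in> Ob" "Y' \<in> Ob"
    using hom_obs[OF coeffs_inD[OF q]] hom_obs[OF f] by blast+
  have "mTm (tdef D N) (pconst D N f) q k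
      = ls (to X X') (to Y Y') (\<lambda>i. tm (pconst D N f i) (q (k - i))) (Suc k)"
    by (rule tdef_tm_coeff[OF coeffs_in_pconst[OF f] q k])
  also have "\<dots> = tm (pconst D N f 0) (q (k - 0))"
    by (rule lsum_single) (use f coeffs_inD[OF q] ob in \<open>auto simp: pconst_pos\<close>)
  finally show ?thesis by simp
qed

lemma tdef_tm_pconst_right: "f \<in> H X' Y' \<Longrightarrow> coeffs_in q X Y \<Longrightarrow> k \<le> N \<Longrightarrow>
    mTm (tdef D N) q (pconst D N f) k = tm (q k) f"
proof -
  assume f: "f \<in> H X' Y'" and q: "coeffs_in q X Y" and k: "k \<le> N"
  have ob: "X \<in> Ob" "Y \<in> Ob" "X' \<in> Ob" "Y' \<in> Ob"
    using hom_obs[OF coeffs_inD[OF q]] hom_obs[OF f] by blast+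
  have "mTm (tdef D N) q (pconst D N f) k
      = ls (to X X') (to Y Y') (\<lambda>i. tm (q i) (pconst D N f (k - i))) (Suc k)"
    by (rule tdef_tm_coeff[OF q coeffs_in_pconst[OF f] k])
  also have "\<dots> = tm (q k) (pconst D N f (k - k))"
    by (rule lsum_single) (use f coeffs_inD[OF q] ob in \<open>auto simp: pconst_pos\<close>)
  finally show ?thesis by simp
qed

lemma tdef_tm_pconst: "f \<in> H X Y \<Longrightarrow> g \<in> H X' Y' \<Longrightarrow>
    mTm (tdef D N) (pconst D N f) (pconst D N g) = pconst D N (tm f g)"
proof
  fix k
  assume f: "f \<in> H X Y" and g: "g \<in> H X' Y'"
  have ob: "X \<in> Ob" "Y \<in> Ob" "X' \<in> Ob" "Y' \<in> Ob" using hom_obs f g by blast+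
  show "mTm (tdef D N) (pconst D N f) (pconst D N g) k = pconst D N (tm f g) k"
  proof (cases "k \<le> N")
    case True
    then show ?thesis
      using tdef_tm_pconst_left[OF f coeffs_in_pconst[OF g] True] f g ob
      by (cases "k = 0") (auto simp: pconst_pos pconst_pos[OF tm_hom[OF f g]])
  next
    case False
    then show ?thesis
      using f g by (simp add: tdef_def pconst_pos[OF tm_hom[OF f g]] hom_dom hom_cod)
  qed
qed

lemma left_inverse_cancel_zero: "v \<in> H B A \<Longrightarrow> u \<in> H A B \<Longrightarrow> cmp v u = idm A \<Longrightarrow> x \<in> H Z A \<Longrightarrow>
    cmp u x = zr Z B \<Longrightarrow> x = zr Z A"
proof -
  assume v: "v \<in> H B A" and u: "u \<in> H A B" and vu: "cmp v u = idm A" and x: "x \<in> H Z A"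
    and ux: "cmp u x = zr Z B"
  have "x = cmp (cmp v u) x" using x vu by simp
  also have "\<dots> = cmp v (cmp u x)" using comp_assoc[OF x u v] by simp
  also have "\<dots> = zr Z A" using ux v hom_obs[OF x] by simp
  finally show ?thesis .
qed

lemma iso_left_inverse: "iso D u \<Longrightarrow> u \<in> H A B \<Longrightarrow> \<exists>v. v \<in> H B A \<and> cmp v u = idm A"
  unfolding iso_def by (auto simp: hom_dom hom_cod)

lemma iso_cancel_zero: "iso D u \<Longrightarrow> u \<in> H A B \<Longrightarrow> x \<in> H Z A \<Longrightarrow> cmp u x = zr Z B \<Longrightarrow> x = zr Z A"
  using iso_left_inverse left_inverse_cancel_zero by metis

lemma iso_tm_idm_cancel_zero: "iso D u \<Longrightarrow> u \<in> H A B \<Longrightarrow> Y \<in> Ob \<Longrightarrow> x \<in> H Z (to A Y) \<Longrightarrow>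
    cmp (tm u (idm Y)) x = zr Z (to B Y) \<Longrightarrow> x = zr Z (to A Y)"
proof -
  assume u: "iso D u" "u \<in> H A B" and Y: "Y \<in> Ob" and x: "x \<in> H Z (to A Y)"
    and ux: "cmp (tm u (idm Y)) x = zr Z (to B Y)"
  obtain v where v: "v \<in> H B A" "cmp v u = idm A" using iso_left_inverse u by blast
  have "cmp (tm v (idm Y)) (tm u (idm Y)) = tm (cmp v u) (cmp (idm Y) (idm Y))"
    by (rule interchange[symmetric]) (use u v Y in auto)
  also have "\<dots> = idm (to A Y)"
    using v Y hom_obs[OF v(1)] comp_id_left[OF id_hom[OF Y]] by (simp add: tm_id)
  finally show ?thesis
    by (rule left_inverse_cancel_zero[rotated 2]) (use u v Y x ux in auto)
qed

lemma idm_tm_iso_cancel_zero: "iso D u \<Longrightarrow> u \<in> H A B \<Longrightarrow> Y \<in> Ob \<Longrightarrow> x \<in> H Z (to Y A) \<Longrightarrow>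
    cmp (tm (idm Y) u) x = zr Z (to Y B) \<Longrightarrow> x = zr Z (to Y A)"
proof -
  assume u: "iso D u" "u \<in> H A B" and Y: "Y \<in> Ob" and x: "x \<in> H Z (to Y A)"
    and ux: "cmp (tm (idm Y) u) x = zr Z (to Y B)"
  obtain v where v: "v \<in> H B A" "cmp v u = idm A" using iso_left_inverse u by blast
  have "cmp (tm (idm Y) v) (tm (idm Y) u) = tm (cmp (idm Y) (idm Y)) (cmp v u)"
    by (rule interchange[symmetric]) (use u v Y in auto)
  also have "\<dots> = idm (to Y A)"
    using v Y hom_obs[OF v(1)] comp_id_left[OF id_hom[OF Y]] by (simp add: tm_id)
  finally show ?thesis
    by (rule left_inverse_cancel_zero[rotated 2]) (use u v Y x ux in auto)
qed

end

locale proper_deformation =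
  C: monoidal_category C + linear_monoidal_category D
  for C :: "('o1, 'm1, 'z1) moncat_scheme"
    and D :: "('k::field, 'o2, 'm2, 'z2) linmoncat_scheme" +
  fixes FO :: "'o1 \<Rightarrow> 'o2" and FM :: "'m1 \<Rightarrow> 'm2"
    and Ft :: "'o1 \<Rightarrow> 'o1 \<Rightarrow> 'm2" and F0 :: "'m2"
    and n :: nat and Fk :: "nat \<Rightarrow> 'o1 \<Rightarrow> 'o1 \<Rightarrow> 'm2"
  assumes monoidal_functor: "is_monfun C D FO FM Ft F0"
    and deformation: "is_proper_deformation C D FO FM Ft F0 n Fk"
begin

lemma underlying_functor: "is_functor C D FO FM"
  using monoidal_functor unfolding is_monfun_def by simp

lemma FO_ob [simp]: "X \<in> C.Ob \<Longrightarrow> FO X \<in> Ob"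
  and arr_FM [simp]: "f \<in> C.Arr \<Longrightarrow> FM f \<in> Arr"
  and dom_FM [simp]: "f \<in> C.Arr \<Longrightarrow> dm (FM f) = FO (C.dm f)"
  and cod_FM [simp]: "f \<in> C.Arr \<Longrightarrow> cd (FM f) = FO (C.cd f)"
  and FM_id [simp]: "X \<in> C.Ob \<Longrightarrow> FM (C.idm X) = idm (FO X)"
  and FM_comp_arr: "f \<in> C.Arr \<Longrightarrow> g \<in> C.Arr \<Longrightarrow> C.cd f = C.dm g \<Longrightarrow>
    FM (C.cmp g f) = cmp (FM g) (FM f)"
  using underlying_functor unfolding is_functor_def by (simp_all add: Hom_def)

lemma FM_hom [intro]: "f \<in> C.H X Y \<Longrightarrow> FM f \<in> H (FO X) (FO Y)"
  by (simp add: Hom_def)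

lemma Ft_hom [intro]: "X \<in> C.Ob \<Longrightarrow> Y \<in> C.Ob \<Longrightarrow> Ft X Y \<in> H (FO (C.to X Y)) (to (FO X) (FO Y))"
  and F0_hom: "F0 \<in> H (FO C.tunit) tunit"
  and F0_iso: "iso D F0"
  using monoidal_functor unfolding is_monfun_def by simp_all

lemma Ft_natural: "f \<in> C.H X X' \<Longrightarrow> g \<in> C.H Y Y' \<Longrightarrow>
    cmp (Ft X' Y') (FM (C.tm f g)) = cmp (tm (FM f) (FM g)) (Ft X Y)"
proof -
  have "\<forall>f\<in>C.Arr. \<forall>g\<in>C.Arr.
      cmp (Ft (C.cd f) (C.cd g)) (FM (C.tm f g)) = cmp (tm (FM f) (FM g)) (Ft (C.dm f) (C.dm g))"
    using monoidal_functor unfolding is_monfun_def by (elim conjE) assumption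
  then show "f \<in> C.H X X' \<Longrightarrow> g \<in> C.H Y Y' \<Longrightarrow> ?thesis"
    by (auto simp: Hom_def)
qed

lemma Fk_in_X2: "1 \<le> k \<Longrightarrow> k \<le> n \<Longrightarrow> inX2 C D FO FM (Fk k)"
  using deformation unfolding is_proper_deformation_def by simp

lemma Fk_hom: "1 \<le> k \<Longrightarrow> k \<le> n \<Longrightarrow> X \<in> C.Ob \<Longrightarrow> Y \<in> C.Ob \<Longrightarrow>
    Fk k X Y \<in> H (FO (C.to X Y)) (to (FO X) (FO Y))"
  using Fk_in_X2 unfolding inX2_def by blast

lemma Fk_natural: "1 \<le> k \<Longrightarrow> k \<le> n \<Longrightarrow> f \<in> C.H X X' \<Longrightarrow> g \<in> C.H Y Y' \<Longrightarrow>
    cmp (Fk k X' Y') (FM (C.tm f g)) = cmp (tm (FM f) (FM g)) (Fk k X Y)"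
  using Fk_in_X2 unfolding inX2_def by (auto simp: Hom_def)

definition Fc :: "nat \<Rightarrow> 'o1 \<Rightarrow> 'o1 \<Rightarrow> 'm2" where
  "Fc k X Y = deformed_Ft C D FO Ft n Fk X Y k"

lemma Fc_0 [simp]: "Fc 0 = Ft"
  by (simp add: Fc_def deformed_Ft_def fun_eq_iff)

lemma arr_Ft [simp]: "X \<in> C.Ob \<Longrightarrow> Y \<in> C.Ob \<Longrightarrow> Ft X Y \<in> Arr"
  and dom_Ft [simp]: "X \<in> C.Ob \<Longrightarrow> Y \<in> C.Ob \<Longrightarrow> dm (Ft X Y) = FO (C.to X Y)"
  and cod_Ft [simp]: "X \<in> C.Ob \<Longrightarrow> Y \<in> C.Ob \<Longrightarrow> cd (Ft X Y) = to (FO X) (FO Y)"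
  using Ft_hom[of X Y] by (simp_all add: Hom_def)

lemma Fc_Fk: "1 \<le> k \<Longrightarrow> k \<le> n \<Longrightarrow> Fc k X Y = Fk k X Y"
  by (simp add: Fc_def deformed_Ft_def)

lemma Fc_beyond [simp]: "n < k \<Longrightarrow> Fc k X Y = zr (FO (C.to X Y)) (to (FO X) (FO Y))"
  by (simp add: Fc_def deformed_Ft_def)

lemma Fc_hom [intro]: "X \<in> C.Ob \<Longrightarrow> Y \<in> C.Ob \<Longrightarrow> Fc k X Y \<in> H (FO (C.to X Y)) (to (FO X) (FO Y))"
  by (cases "k = 0"; cases "k \<le> n") (auto simp: Fc_Fk Fk_hom)

lemma arr_Fc [simp]: "X \<in> C.Ob \<Longrightarrow> Y \<in> C.Ob \<Longrightarrow> Fc k X Y \<in> Arr"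
  and dom_Fc [simp]: "X \<in> C.Ob \<Longrightarrow> Y \<in> C.Ob \<Longrightarrow> dm (Fc k X Y) = FO (C.to X Y)"
  and cod_Fc [simp]: "X \<in> C.Ob \<Longrightarrow> Y \<in> C.Ob \<Longrightarrow> cd (Fc k X Y) = to (FO X) (FO Y)"
  using Fc_hom[of X Y k] by (simp_all add: Hom_def)

lemma Fc_natural: "f \<in> C.H X X' \<Longrightarrow> g \<in> C.H Y Y' \<Longrightarrow>
    cmp (Fc k X' Y') (FM (C.tm f g)) = cmp (tm (FM f) (FM g)) (Fc k X Y)"
proof -
  assume f: "f \<in> C.H X X'" and g: "g \<in> C.H Y Y'"
  have ob: "X \<in> C.Ob" "X' \<in> C.Ob" "Y \<in> C.Ob" "Y' \<in> C.Ob" using f g C.hom_obs by auto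
  consider "k = 0" | "1 \<le> k" "k \<le> n" | "n < k" by linarith
  then show ?thesis
  proof cases
    case 1
    then show ?thesis using Ft_natural f g by simp
  next
    case 2
    then show ?thesis using Fk_natural f g by (simp add: Fc_Fk)
  next
    case 3
    have "FM (C.tm f g) \<in> H (FO (C.to X Y)) (FO (C.to X' Y'))"
      and "tm (FM f) (FM g) \<in> H (to (FO X) (FO Y)) (to (FO X') (FO Y'))"
      using f g by blast+
    then show ?thesis using 3 ob by simp
  qed
qed

lemma Fc_natural_arr: "f \<in> C.Arr \<Longrightarrow> g \<in> C.Arr \<Longrightarrow> C.cd f = X' \<Longrightarrow> C.cd g = Y' \<Longrightarrow>
    cmp (Fc k X' Y') (FM (C.tm f g)) = cmp (tm (FM f) (FM g)) (Fc k (C.dm f) (C.dm g))"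
  using Fc_natural[OF C.arr_hom[of f] C.arr_hom[of g]] by blast

lemma Fc_natural_comp: "f \<in> C.Arr \<Longrightarrow> g \<in> C.Arr \<Longrightarrow> C.cd f = X' \<Longrightarrow> C.cd g = Y' \<Longrightarrow>
    r \<in> Arr \<Longrightarrow> cd r = FO (C.to (C.dm f) (C.dm g)) \<Longrightarrow>
    cmp (Fc k X' Y') (cmp (FM (C.tm f g)) r) = cmp (tm (FM f) (FM g)) (cmp (Fc k (C.dm f) (C.dm g)) r)"
proof -
  assume f: "f \<in> C.Arr" "C.cd f = X'" and g: "g \<in> C.Arr" "C.cd g = Y'"
    and r: "r \<in> Arr" "cd r = FO (C.to (C.dm f) (C.dm g))"
  have ob: "X' \<in> C.Ob" "Y' \<in> C.Ob" using f g C.cd_ob by blast+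
  have "cmp (Fc k X' Y') (cmp (FM (C.tm f g)) r) = cmp (cmp (Fc k X' Y') (FM (C.tm f g))) r"
    by (rule comp_assoc_arr[symmetric]) (use f g r ob in simp_all)
  also have "\<dots> = cmp (cmp (tm (FM f) (FM g)) (Fc k (C.dm f) (C.dm g))) r"
    using Fc_natural_arr[OF f(1) g(1) f(2) g(2)] by simp
  also have "\<dots> = cmp (tm (FM f) (FM g)) (cmp (Fc k (C.dm f) (C.dm g)) r)"
    by (rule comp_assoc_arr) (use f g r in simp_all)
  finally show ?thesis .
qed

lemma Fc_natural_comp': "f \<in> C.Arr \<Longrightarrow> g \<in> C.Arr \<Longrightarrow> C.dm f = X \<Longrightarrow> C.dm g = Y \<Longrightarrow>
    C.cd f = X' \<Longrightarrow> C.cd g = Y' \<Longrightarrow> r \<in> Arr \<Longrightarrow> cd r = FO (C.to X Y) \<Longrightarrow>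
    cmp (tm (FM f) (FM g)) (cmp (Fc k X Y) r) = cmp (Fc k X' Y') (cmp (FM (C.tm f g)) r)"
  using Fc_natural_comp by simp

lemma coeffs_in_Fc: "X \<in> C.Ob \<Longrightarrow> Y \<in> C.Ob \<Longrightarrow>
    coeffs_in (\<lambda>k. Fc k X Y) (FO (C.to X Y)) (to (FO X) (FO Y))"
  unfolding coeffs_in_def by blast

lemma deformed_monoidal_functor:
  "is_monfun C (tdef D n) FO (\<lambda>f. pconst D n (FM f)) (\<lambda>X Y k. Fc k X Y) (pconst D n F0)"
  using deformation unfolding is_proper_deformation_def Fc_def by simp

lemma deformed_hexagon: "X \<in> C.Ob \<Longrightarrow> Y \<in> C.Ob \<Longrightarrow> Z \<in> C.Ob \<Longrightarrow>
    cComp (tdef D n) (pconst D n (al (FO X) (FO Y) (FO Z)))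
      (cComp (tdef D n) (mTm (tdef D n) (\<lambda>k. Fc k X Y) (pconst D n (idm (FO Z)))) (\<lambda>k. Fc k (C.to X Y) Z))
    = cComp (tdef D n) (mTm (tdef D n) (pconst D n (idm (FO X))) (\<lambda>k. Fc k Y Z))
        (cComp (tdef D n) (\<lambda>k. Fc k X (C.to Y Z)) (pconst D n (FM (C.al X Y Z))))"
  and deformed_lunit: "X \<in> C.Ob \<Longrightarrow> pconst D n (FM (mLunit C X))
    = cComp (tdef D n) (pconst D n (mLunit D (FO X)))
        (cComp (tdef D n) (mTm (tdef D n) (pconst D n F0) (pconst D n (idm (FO X)))) (\<lambda>k. Fc k C.tunit X))"
  and deformed_runit: "X \<in> C.Ob \<Longrightarrow> pconst D n (FM (mRunit C X))
    = cComp (tdef D n) (pconst D n (mRunit D (FO X)))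
        (cComp (tdef D n) (mTm (tdef D n) (pconst D n (idm (FO X))) (pconst D n F0)) (\<lambda>k. Fc k X C.tunit))"
  using deformed_monoidal_functor unfolding is_monfun_def by simp_all

lemma Fc_tunit_left: "1 \<le> k \<Longrightarrow> k \<le> n \<Longrightarrow> X \<in> C.Ob \<Longrightarrow>
    Fc k C.tunit X = zr (FO (C.to C.tunit X)) (to (FO C.tunit) (FO X))"
proof -
  assume k: "1 \<le> k" "k \<le> n" and X: "X \<in> C.Ob"
  have G: "coeffs_in (\<lambda>k. Fc k C.tunit X) (FO (C.to C.tunit X)) (to (FO C.tunit) (FO X))"
    using X by (simp add: coeffs_in_Fc)
  have u: "tm F0 (idm (FO X)) \<in> H (to (FO C.tunit) (FO X)) (to tunit (FO X))"
    using F0_hom X by auto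
  have "zr (FO (C.to C.tunit X)) (FO X) = pconst D n (FM (mLunit C X)) k"
    using k pconst_pos[OF FM_hom[OF C.lunit_hom[OF X]]] by simp
  also have "\<dots> = cComp (tdef D n) (pconst D n (mLunit D (FO X)))
      (cComp (tdef D n) (pconst D n (tm F0 (idm (FO X)))) (\<lambda>k. Fc k C.tunit X)) k"
    using deformed_lunit[OF X] tdef_tm_pconst[OF F0_hom id_hom[of "FO X"]] X by simp
  also have "\<dots> = cmp (mLunit D (FO X)) (cmp (tm F0 (idm (FO X))) (Fc k C.tunit X))"
    using tdef_comp_pconst_left[OF lunit_hom coeffs_in_tdef_comp[OF G coeffs_in_pconst[OF u]] k(2)]
      tdef_comp_pconst_left[OF u G k(2)] X by simp
  finally have "cmp (tm F0 (idm (FO X))) (Fc k C.tunit X) = zr (FO (C.to C.tunit X)) (to tunit (FO X))"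
    by (intro iso_cancel_zero[OF lunit_iso lunit_hom]) (use X comp_hom[OF Fc_hom u] in auto)
  then show ?thesis
    by (rule iso_tm_idm_cancel_zero[OF F0_iso F0_hom, rotated 2]) (use X in auto)
qed

lemma Fc_tunit_right: "1 \<le> k \<Longrightarrow> k \<le> n \<Longrightarrow> X \<in> C.Ob \<Longrightarrow>
    Fc k X C.tunit = zr (FO (C.to X C.tunit)) (to (FO X) (FO C.tunit))"
proof -
  assume k: "1 \<le> k" "k \<le> n" and X: "X \<in> C.Ob"
  have G: "coeffs_in (\<lambda>k. Fc k X C.tunit) (FO (C.to X C.tunit)) (to (FO X) (FO C.tunit))"
    using X by (simp add: coeffs_in_Fc)
  have u: "tm (idm (FO X)) F0 \<in> H (to (FO X) (FO C.tunit)) (to (FO X) tunit)"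
    using F0_hom X by auto
  have "zr (FO (C.to X C.tunit)) (FO X) = pconst D n (FM (mRunit C X)) k"
    using k pconst_pos[OF FM_hom[OF C.runit_hom[OF X]]] by simp
  also have "\<dots> = cComp (tdef D n) (pconst D n (mRunit D (FO X)))
      (cComp (tdef D n) (pconst D n (tm (idm (FO X)) F0)) (\<lambda>k. Fc k X C.tunit)) k"
    using deformed_runit[OF X] tdef_tm_pconst[OF id_hom[of "FO X"] F0_hom] X by simp
  also have "\<dots> = cmp (mRunit D (FO X)) (cmp (tm (idm (FO X)) F0) (Fc k X C.tunit))"
    using tdef_comp_pconst_left[OF runit_hom coeffs_in_tdef_comp[OF G coeffs_in_pconst[OF u]] k(2)]
      tdef_comp_pconst_left[OF u G k(2)] X by simp
  finally have "cmp (tm (idm (FO X)) F0) (Fc k X C.tunit) = zr (FO (C.to X C.tunit)) (to (FO X) tunit)"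
    by (intro iso_cancel_zero[OF runit_iso runit_hom]) (use X comp_hom[OF Fc_hom u] in auto)
  then show ?thesis
    by (rule idm_tm_iso_cancel_zero[OF F0_iso F0_hom, rotated 2]) (use X in auto)
qed

lemma Fk_in_C2: "k \<in> {1..n} \<Longrightarrow> inC2 C D FO FM (Fk k)"
  unfolding inC2_def using Fk_in_X2 Fc_tunit_left Fc_tunit_right by (auto simp: Fc_Fk)

section \<open>The hexagon defect and the obstruction\<close>

abbreviation "src3 X Y Z \<equiv> FO (C.to (C.to X Y) Z)"
abbreviation "tgt3 X Y Z \<equiv> to (FO X) (to (FO Y) (FO Z))"

definition hex_lhs :: "nat \<Rightarrow> nat \<Rightarrow> 'o1 \<Rightarrow> 'o1 \<Rightarrow> 'o1 \<Rightarrow> 'm2" where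
  "hex_lhs b c X Y Z = cmp (al (FO X) (FO Y) (FO Z)) (cmp (tm (Fc b X Y) (idm (FO Z))) (Fc c (C.to X Y) Z))"

definition hex_rhs :: "nat \<Rightarrow> nat \<Rightarrow> 'o1 \<Rightarrow> 'o1 \<Rightarrow> 'o1 \<Rightarrow> 'm2" where
  "hex_rhs b c X Y Z = cmp (tm (idm (FO X)) (Fc b Y Z)) (cmp (Fc c X (C.to Y Z)) (FM (C.al X Y Z)))"

text \<open>\<open>hex_defect m\<close> is \<open>H\<^sub>m\<close>, the \<open>\<epsilon>\<^sup>m\<close>-coefficient of the difference of the two
  sides of the hexagon axiom for the deformed structure map.\<close>

definition hex_defect :: "nat \<Rightarrow> 'o1 \<Rightarrow> 'o1 \<Rightarrow> 'o1 \<Rightarrow> 'm2" where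
  "hex_defect m X Y Z = ls (src3 X Y Z) (tgt3 X Y Z)
     (\<lambda>b. add (hex_lhs b (m - b) X Y Z) (ng (hex_rhs b (m - b) X Y Z))) (Suc m)"

lemma hex_lhs_hom [simp]: "X \<in> C.Ob \<Longrightarrow> Y \<in> C.Ob \<Longrightarrow> Z \<in> C.Ob \<Longrightarrow> hex_lhs b c X Y Z \<in> H (src3 X Y Z) (tgt3 X Y Z)"
  and hex_rhs_hom [simp]: "X \<in> C.Ob \<Longrightarrow> Y \<in> C.Ob \<Longrightarrow> Z \<in> C.Ob \<Longrightarrow> hex_rhs b c X Y Z \<in> H (src3 X Y Z) (tgt3 X Y Z)"
  unfolding hex_lhs_def hex_rhs_def by (simp_all add: hom_intro)

lemma hex_defect_hom: "X \<in> C.Ob \<Longrightarrow> Y \<in> C.Ob \<Longrightarrow> Z \<in> C.Ob \<Longrightarrow> hex_defect m X Y Z \<in> H (src3 X Y Z) (tgt3 X Y Z)"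
  unfolding hex_defect_def by (rule lsum_hom) simp_all

lemma hex_defect_split: "X \<in> C.Ob \<Longrightarrow> Y \<in> C.Ob \<Longrightarrow> Z \<in> C.Ob \<Longrightarrow>
    hex_defect m X Y Z = add (ls (src3 X Y Z) (tgt3 X Y Z) (\<lambda>b. hex_lhs b (m - b) X Y Z) (Suc m))
      (ng (ls (src3 X Y Z) (tgt3 X Y Z) (\<lambda>b. hex_rhs b (m - b) X Y Z) (Suc m)))"
  unfolding hex_defect_def by (rule lsum_diff) simp_all

lemma additive_hex_defect: "additive L (src3 X Y Z) (tgt3 X Y Z) X' Y' \<Longrightarrow>
    X \<in> C.Ob \<Longrightarrow> Y \<in> C.Ob \<Longrightarrow> Z \<in> C.Ob \<Longrightarrow>
    L (hex_defect m X Y Z) = ls X' Y' (\<lambda>b. add (L (hex_lhs b (m - b) X Y Z)) (ng (L (hex_rhs b (m - b) X Y Z)))) (Suc m)"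
  unfolding hex_defect_def by (rule additive_lsum_diff) simp_all

lemma deformed_hex_lhs_coeff: "X \<in> C.Ob \<Longrightarrow> Y \<in> C.Ob \<Longrightarrow> Z \<in> C.Ob \<Longrightarrow> k \<le> n \<Longrightarrow>
    cComp (tdef D n) (pconst D n (al (FO X) (FO Y) (FO Z)))
      (cComp (tdef D n) (mTm (tdef D n) (\<lambda>k. Fc k X Y) (pconst D n (idm (FO Z)))) (\<lambda>k. Fc k (C.to X Y) Z)) k
    = ls (src3 X Y Z) (tgt3 X Y Z) (\<lambda>i. hex_lhs i (k - i) X Y Z) (Suc k)"
proof -
  assume ob: "X \<in> C.Ob" "Y \<in> C.Ob" "Z \<in> C.Ob" and k: "k \<le> n"
  let ?s = "mTm (tdef D n) (\<lambda>k. Fc k X Y) (pconst D n (idm (FO Z)))"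
  have s: "coeffs_in ?s (to (FO (C.to X Y)) (FO Z)) (to (to (FO X) (FO Y)) (FO Z))"
    by (rule coeffs_in_tdef_tm) (use ob in \<open>simp_all add: coeffs_in_Fc coeffs_in_pconst\<close>)
  have s_coeff: "i \<le> n \<Longrightarrow> ?s i = tm (Fc i X Y) (idm (FO Z))" for i
    using tdef_tm_pconst_right[OF id_hom[of "FO Z"] coeffs_in_Fc[of X Y]] ob by simp
  have a: "al (FO X) (FO Y) (FO Z) \<in> H (to (to (FO X) (FO Y)) (FO Z)) (tgt3 X Y Z)"
    using ob by auto
  have "cComp (tdef D n) (pconst D n (al (FO X) (FO Y) (FO Z))) (cComp (tdef D n) ?s (\<lambda>k. Fc k (C.to X Y) Z)) k
      = cmp (al (FO X) (FO Y) (FO Z)) (cComp (tdef D n) ?s (\<lambda>k. Fc k (C.to X Y) Z) k)"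
    by (rule tdef_comp_pconst_left[OF a coeffs_in_tdef_comp[OF coeffs_in_Fc s] k]) (use ob in simp_all)
  also have "cComp (tdef D n) ?s (\<lambda>k. Fc k (C.to X Y) Z) k = ls (src3 X Y Z) (to (to (FO X) (FO Y)) (FO Z))
      (\<lambda>i. cmp (tm (Fc i X Y) (idm (FO Z))) (Fc (k - i) (C.to X Y) Z)) (Suc k)"
    by (rule trans[OF tdef_comp_coeff[OF coeffs_in_Fc s k] lsum_cong]) (use ob k s_coeff in auto)
  also have "cmp (al (FO X) (FO Y) (FO Z)) \<dots> = ls (src3 X Y Z) (tgt3 X Y Z) (\<lambda>i. hex_lhs i (k - i) X Y Z) (Suc k)"
    unfolding hex_lhs_def by (rule additive_lsum[OF additive_postcomp[OF a]]) (use ob in \<open>auto intro!: hom_intro\<close>)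
  finally show ?thesis .
qed

lemma deformed_hex_rhs_coeff: "X \<in> C.Ob \<Longrightarrow> Y \<in> C.Ob \<Longrightarrow> Z \<in> C.Ob \<Longrightarrow> k \<le> n \<Longrightarrow>
    cComp (tdef D n) (mTm (tdef D n) (pconst D n (idm (FO X))) (\<lambda>k. Fc k Y Z))
      (cComp (tdef D n) (\<lambda>k. Fc k X (C.to Y Z)) (pconst D n (FM (C.al X Y Z)))) k
    = ls (src3 X Y Z) (tgt3 X Y Z) (\<lambda>i. hex_rhs i (k - i) X Y Z) (Suc k)"
proof -
  assume ob: "X \<in> C.Ob" "Y \<in> C.Ob" "Z \<in> C.Ob" and k: "k \<le> n"
  let ?r = "cComp (tdef D n) (\<lambda>k. Fc k X (C.to Y Z)) (pconst D n (FM (C.al X Y Z)))"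
  let ?s = "mTm (tdef D n) (pconst D n (idm (FO X))) (\<lambda>k. Fc k Y Z)"
  have r: "coeffs_in ?r (src3 X Y Z) (to (FO X) (FO (C.to Y Z)))"
    by (rule coeffs_in_tdef_comp) (use ob in \<open>auto simp: coeffs_in_Fc intro!: coeffs_in_pconst\<close>)
  have r_coeff: "i \<le> n \<Longrightarrow> ?r i = cmp (Fc i X (C.to Y Z)) (FM (C.al X Y Z))" for i
    using tdef_comp_pconst_right[OF FM_hom[OF C.al_hom] coeffs_in_Fc[of X "C.to Y Z"]] ob by simp
  have s: "coeffs_in ?s (to (FO X) (FO (C.to Y Z))) (tgt3 X Y Z)"
    by (rule coeffs_in_tdef_tm) (use ob in \<open>simp_all add: coeffs_in_Fc coeffs_in_pconst\<close>)
  have s_coeff: "i \<le> n \<Longrightarrow> ?s i = tm (idm (FO X)) (Fc i Y Z)" for i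
    using tdef_tm_pconst_left[OF id_hom[of "FO X"] coeffs_in_Fc[of Y Z]] ob by simp
  show ?thesis
    by (rule trans[OF tdef_comp_coeff[OF r s k] lsum_cong]) (use ob k r_coeff s_coeff in \<open>auto simp: hex_rhs_def\<close>)
qed

lemma hex_defect_eq_zero: "X \<in> C.Ob \<Longrightarrow> Y \<in> C.Ob \<Longrightarrow> Z \<in> C.Ob \<Longrightarrow> m \<le> n \<Longrightarrow>
    hex_defect m X Y Z = zr (src3 X Y Z) (tgt3 X Y Z)"
  using hex_defect_split deformed_hexagon deformed_hex_lhs_coeff deformed_hex_rhs_coeff
  by (simp add: lsum_hom del: lsum.simps)

lemma hex_terms_edge: "X \<in> C.Ob \<Longrightarrow> Y \<in> C.Ob \<Longrightarrow> Z \<in> C.Ob \<Longrightarrow>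
    hex_lhs 0 (Suc n) X Y Z = zr (src3 X Y Z) (tgt3 X Y Z) \<and> hex_lhs (Suc n) 0 X Y Z = zr (src3 X Y Z) (tgt3 X Y Z) \<and>
    hex_rhs 0 (Suc n) X Y Z = zr (src3 X Y Z) (tgt3 X Y Z) \<and> hex_rhs (Suc n) 0 X Y Z = zr (src3 X Y Z) (tgt3 X Y Z)"
  unfolding hex_lhs_def hex_rhs_def by simp

lemma obstruction_eq_hex_defect: "X \<in> C.Ob \<Longrightarrow> Y \<in> C.Ob \<Longrightarrow> Z \<in> C.Ob \<Longrightarrow>
    obstruction C D FO FM n Fk X Y Z = hex_defect (Suc n) X Y Z"
proof -
  assume ob: "X \<in> C.Ob" "Y \<in> C.Ob" "Z \<in> C.Ob"
  have lhs: "ls (src3 X Y Z) (tgt3 X Y Z) (\<lambda>b. hex_lhs b (Suc n - b) X Y Z) (Suc (Suc n))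
      = ls (src3 X Y Z) (tgt3 X Y Z) (\<lambda>i. hex_lhs (n - i) (Suc i) X Y Z) n"
    and rhs: "ls (src3 X Y Z) (tgt3 X Y Z) (\<lambda>b. hex_rhs b (Suc n - b) X Y Z) (Suc (Suc n))
      = ls (src3 X Y Z) (tgt3 X Y Z) (\<lambda>i. hex_rhs (n - i) (Suc i) X Y Z) n"
    by (rule lsum_antidiagonal_interior; use ob hex_terms_edge[OF ob] in simp)+
  have "hex_lhs (n - i) (Suc i) X Y Z
      = cmp (al (FO X) (FO Y) (FO Z)) (cmp (tm (Fk (n - i) X Y) (idm (FO Z))) (Fk (i + 1) (C.to X Y) Z))"
    and "hex_rhs (n - i) (Suc i) X Y Z
      = cmp (tm (idm (FO X)) (Fk (n - i) Y Z)) (cmp (Fk (i + 1) X (C.to Y Z)) (FM (C.al X Y Z)))"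
    if "i < n" for i
    using that by (simp_all add: hex_lhs_def hex_rhs_def Fc_Fk)
  then show ?thesis
    unfolding hex_defect_split[OF ob] lhs rhs obstruction_def Let_def
    by (simp cong: lsum_cong del: lsum.simps)
qed

lemma FM_al_natural: "f \<in> C.H X X' \<Longrightarrow> g \<in> C.H Y Y' \<Longrightarrow> h \<in> C.H Z Z' \<Longrightarrow>
    cmp (FM (C.al X' Y' Z')) (FM (C.tm (C.tm f g) h)) = cmp (FM (C.tm f (C.tm g h))) (FM (C.al X Y Z))"
proof -
  assume a: "f \<in> C.H X X'" "g \<in> C.H Y Y'" "h \<in> C.H Z Z'"
  then have ob: "X \<in> C.Ob" "Y \<in> C.Ob" "Z \<in> C.Ob" "X' \<in> C.Ob" "Y' \<in> C.Ob" "Z' \<in> C.Ob"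
    using C.hom_obs by blast+
  have "cmp (FM (C.al X' Y' Z')) (FM (C.tm (C.tm f g) h)) = FM (C.cmp (C.al X' Y' Z') (C.tm (C.tm f g) h))"
    using a ob by (simp add: FM_comp_arr C.hom_arr C.hom_dom C.hom_cod)
  also have "\<dots> = FM (C.cmp (C.tm f (C.tm g h)) (C.al X Y Z))"
    using C.al_natural[OF a] by simp
  also have "\<dots> = cmp (FM (C.tm f (C.tm g h))) (FM (C.al X Y Z))"
    using a ob by (simp add: FM_comp_arr C.hom_arr C.hom_dom C.hom_cod)
  finally show ?thesis .
qed

lemma hex_lhs_natural: "f \<in> C.H X X' \<Longrightarrow> g \<in> C.H Y Y' \<Longrightarrow> h \<in> C.H Z Z' \<Longrightarrow>
    cmp (hex_lhs b c X' Y' Z') (FM (C.tm (C.tm f g) h)) = cmp (tm (FM f) (tm (FM g) (FM h))) (hex_lhs b c X Y Z)"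
  and hex_rhs_natural: "f \<in> C.H X X' \<Longrightarrow> g \<in> C.H Y Y' \<Longrightarrow> h \<in> C.H Z Z' \<Longrightarrow>
    cmp (hex_rhs b c X' Y' Z') (FM (C.tm (C.tm f g) h)) = cmp (tm (FM f) (tm (FM g) (FM h))) (hex_rhs b c X Y Z)"
proof -
  assume a: "f \<in> C.H X X'" "g \<in> C.H Y Y'" "h \<in> C.H Z Z'"
  then have ob: "X \<in> C.Ob" "Y \<in> C.Ob" "Z \<in> C.Ob" "X' \<in> C.Ob" "Y' \<in> C.Ob" "Z' \<in> C.Ob"
    using C.hom_obs by blast+
  have arr: "f \<in> C.Arr" "g \<in> C.Arr" "h \<in> C.Arr" "C.dm f = X" "C.dm g = Y" "C.dm h = Z"
    "C.cd f = X'" "C.cd g = Y'" "C.cd h = Z'"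
    using a by (auto simp: C.hom_arr C.hom_dom C.hom_cod)
  show "cmp (hex_lhs b c X' Y' Z') (FM (C.tm (C.tm f g) h)) = cmp (tm (FM f) (tm (FM g) (FM h))) (hex_lhs b c X Y Z)"
    unfolding hex_lhs_def using ob arr
    by (simp add: comp_normalize Fc_natural_arr Fc_natural_comp al_natural_comp)
  have "cmp (hex_rhs b c X' Y' Z') (FM (C.tm (C.tm f g) h)) = cmp (tm (idm (FO X')) (Fc b Y' Z'))
      (cmp (Fc c X' (C.to Y' Z')) (cmp (FM (C.al X' Y' Z')) (FM (C.tm (C.tm f g) h))))"
    unfolding hex_rhs_def using ob arr by (simp add: comp_normalize)
  also have "\<dots> = cmp (tm (idm (FO X')) (Fc b Y' Z'))
      (cmp (Fc c X' (C.to Y' Z')) (cmp (FM (C.tm f (C.tm g h))) (FM (C.al X Y Z))))"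
    using FM_al_natural[OF a] by simp
  also have "\<dots> = cmp (tm (FM f) (tm (FM g) (FM h))) (hex_rhs b c X Y Z)"
    unfolding hex_rhs_def using ob arr by (simp add: comp_normalize Fc_natural_arr Fc_natural_comp)
  finally show "cmp (hex_rhs b c X' Y' Z') (FM (C.tm (C.tm f g) h)) = cmp (tm (FM f) (tm (FM g) (FM h))) (hex_rhs b c X Y Z)" .
qed

lemma hex_defect_natural: "f \<in> C.H X X' \<Longrightarrow> g \<in> C.H Y Y' \<Longrightarrow> h \<in> C.H Z Z' \<Longrightarrow>
    cmp (hex_defect m X' Y' Z') (FM (C.tm (C.tm f g) h)) = cmp (tm (FM f) (tm (FM g) (FM h))) (hex_defect m X Y Z)"
proof -
  assume a: "f \<in> C.H X X'" "g \<in> C.H Y Y'" "h \<in> C.H Z Z'"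
  then have ob: "X \<in> C.Ob" "Y \<in> C.Ob" "Z \<in> C.Ob" "X' \<in> C.Ob" "Y' \<in> C.Ob" "Z' \<in> C.Ob"
    using C.hom_obs by blast+
  have u: "FM (C.tm (C.tm f g) h) \<in> H (src3 X Y Z) (src3 X' Y' Z')"
    and v: "tm (FM f) (tm (FM g) (FM h)) \<in> H (tgt3 X Y Z) (tgt3 X' Y' Z')"
    using a by blast+
  have "cmp (hex_defect m X' Y' Z') (FM (C.tm (C.tm f g) h)) = ls (src3 X Y Z) (tgt3 X' Y' Z')
      (\<lambda>b. add (cmp (hex_lhs b (m - b) X' Y' Z') (FM (C.tm (C.tm f g) h)))
        (ng (cmp (hex_rhs b (m - b) X' Y' Z') (FM (C.tm (C.tm f g) h))))) (Suc m)"
    by (rule additive_hex_defect[OF additive_precomp[OF u]]) (use ob in simp_all)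
  also have "\<dots> = ls (src3 X Y Z) (tgt3 X' Y' Z')
      (\<lambda>b. add (cmp (tm (FM f) (tm (FM g) (FM h))) (hex_lhs b (m - b) X Y Z))
        (ng (cmp (tm (FM f) (tm (FM g) (FM h))) (hex_rhs b (m - b) X Y Z)))) (Suc m)"
    by (rule lsum_cong) (simp add: hex_lhs_natural[OF a] hex_rhs_natural[OF a])
  also have "\<dots> = cmp (tm (FM f) (tm (FM g) (FM h))) (hex_defect m X Y Z)"
    by (rule additive_hex_defect[OF additive_postcomp[OF v], symmetric]) (use ob in simp_all)
  finally show ?thesis .
qed

lemma hex_defect_tunit: "X \<in> C.Ob \<Longrightarrow> Y \<in> C.Ob \<Longrightarrow> Z \<in> C.Ob \<Longrightarrow> X = C.tunit \<or> Y = C.tunit \<or> Z = C.tunit \<Longrightarrow>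
    hex_defect (Suc n) X Y Z = zr (src3 X Y Z) (tgt3 X Y Z)"
proof -
  assume ob: "X \<in> C.Ob" "Y \<in> C.Ob" "Z \<in> C.Ob" and u: "X = C.tunit \<or> Y = C.tunit \<or> Z = C.tunit"
  have inner: "hex_lhs b c X Y Z = zr (src3 X Y Z) (tgt3 X Y Z) \<and> hex_rhs b c X Y Z = zr (src3 X Y Z) (tgt3 X Y Z)"
    if "1 \<le> b" "b \<le> n" "1 \<le> c" "c \<le> n" for b c
    using u that ob unfolding hex_lhs_def hex_rhs_def by (elim disjE) (simp_all add: Fc_tunit_left Fc_tunit_right)
  show ?thesis unfolding hex_defect_def
  proof (rule lsum_zero)
    fix b assume b: "b < Suc (Suc n)"
    show "add (hex_lhs b (Suc n - b) X Y Z) (ng (hex_rhs b (Suc n - b) X Y Z)) = zr (src3 X Y Z) (tgt3 X Y Z)"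
    proof (cases "b = 0 \<or> b = Suc n")
      case True
      then show ?thesis using hex_terms_edge[OF ob] ob by auto
    next
      case False
      then have "1 \<le> b" "b \<le> n" "1 \<le> Suc n - b" "Suc n - b \<le> n" using b by auto
      then show ?thesis using inner[of b "Suc n - b"] ob by simp
    qed
  qed (use ob in simp_all)
qed

section \<open>The coboundary of the hexagon defect\<close>

abbreviation "src4 A B E W \<equiv> FO (C.to (C.to (C.to A B) E) W)"
abbreviation "tgt4 A B E W \<equiv> to (FO A) (to (FO B) (to (FO E) (FO W)))"

text \<open>The five padded summands of the coboundary \<open>delta3\<close>, with the deformed coefficient
  \<open>Fc a\<close> in place of \<open>Ft\<close>; \<open>face i\<close> receives the cochain evaluated at the \<open>i\<close>-th face.\<close>

definition face0 :: "nat \<Rightarrow> 'o1 \<Rightarrow> 'o1 \<Rightarrow> 'o1 \<Rightarrow> 'o1 \<Rightarrow> 'm2 \<Rightarrow> 'm2" where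
  "face0 a A B E W x = cmp (tm (idm (FO A)) x) (cmp (Fc a A (C.to (C.to B E) W))
     (cmp (FM (C.al A (C.to B E) W)) (FM (C.tm (C.al A B E) (C.idm W)))))"

definition face1 :: "nat \<Rightarrow> 'o1 \<Rightarrow> 'o1 \<Rightarrow> 'o1 \<Rightarrow> 'o1 \<Rightarrow> 'm2 \<Rightarrow> 'm2" where
  "face1 a A B E W x = cmp (al (FO A) (FO B) (to (FO E) (FO W))) (cmp (tm (Fc a A B) (idm (to (FO E) (FO W)))) x)"

definition face2 :: "nat \<Rightarrow> 'o1 \<Rightarrow> 'o1 \<Rightarrow> 'o1 \<Rightarrow> 'o1 \<Rightarrow> 'm2 \<Rightarrow> 'm2" where
  "face2 a A B E W x = cmp (tm (idm (FO A)) (cmp (al (FO B) (FO E) (FO W)) (tm (Fc a B E) (idm (FO W)))))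
     (cmp x (FM (C.tm (C.al A B E) (C.idm W))))"

definition face3 :: "nat \<Rightarrow> 'o1 \<Rightarrow> 'o1 \<Rightarrow> 'o1 \<Rightarrow> 'o1 \<Rightarrow> 'm2 \<Rightarrow> 'm2" where
  "face3 a A B E W x = cmp (tm (idm (FO A)) (tm (idm (FO B)) (Fc a E W))) (cmp x (FM (C.al (C.to A B) E W)))"

definition face4 :: "nat \<Rightarrow> 'o1 \<Rightarrow> 'o1 \<Rightarrow> 'o1 \<Rightarrow> 'o1 \<Rightarrow> 'm2 \<Rightarrow> 'm2" where
  "face4 a A B E W x = cmp (tm (idm (FO A)) (al (FO B) (FO E) (FO W)))
     (cmp (al (FO A) (to (FO B) (FO E)) (FO W)) (cmp (tm x (idm (FO W))) (Fc a (C.to (C.to A B) E) W)))"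

lemma delta3_faces: "delta3 C D FO FM (Fc a) \<phi> A B E W =
    alt5 (face0 a A B E W (\<phi> B E W)) (face1 a A B E W (\<phi> (C.to A B) E W)) (face2 a A B E W (\<phi> A (C.to B E) W))
      (face3 a A B E W (\<phi> A B (C.to E W))) (face4 a A B E W (\<phi> A B E))"
  unfolding delta3_def Let_def alt5_def face0_def face1_def face2_def face3_def face4_def ..

context
  fixes A B E W
  assumes ob: "A \<in> C.Ob" "B \<in> C.Ob" "E \<in> C.Ob" "W \<in> C.Ob"
begin

lemma face0_additive: "additive (face0 a A B E W) (src3 B E W) (tgt3 B E W) (src4 A B E W) (tgt4 A B E W)"
proof -
  have r: "cmp (Fc a A (C.to (C.to B E) W)) (cmp (FM (C.al A (C.to B E) W)) (FM (C.tm (C.al A B E) (C.idm W))))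
      \<in> H (src4 A B E W) (to (FO A) (src3 B E W))"
    using ob by (simp add: hom_intro)
  have "additive (\<lambda>x. cmp (tm (idm (FO A)) x) (cmp (Fc a A (C.to (C.to B E) W))
      (cmp (FM (C.al A (C.to B E) W)) (FM (C.tm (C.al A B E) (C.idm W))))))
      (src3 B E W) (tgt3 B E W) (src4 A B E W) (tgt4 A B E W)"
    by (rule additive_compose[OF additive_tm_right[OF id_hom] additive_precomp[OF r]]) (use ob in simp_all)
  then show ?thesis unfolding face0_def .
qed

lemma face1_additive: "additive (face1 a A B E W) (src3 (C.to A B) E W) (tgt3 (C.to A B) E W) (src4 A B E W) (tgt4 A B E W)"
proof -
  have g: "tm (Fc a A B) (idm (to (FO E) (FO W))) \<in> H (tgt3 (C.to A B) E W) (to (to (FO A) (FO B)) (to (FO E) (FO W)))"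
    and h: "al (FO A) (FO B) (to (FO E) (FO W)) \<in> H (to (to (FO A) (FO B)) (to (FO E) (FO W))) (tgt4 A B E W)"
    using ob by (simp_all add: hom_intro)
  have "additive (\<lambda>x. cmp (al (FO A) (FO B) (to (FO E) (FO W))) (cmp (tm (Fc a A B) (idm (to (FO E) (FO W)))) x))
      (src3 (C.to A B) E W) (tgt3 (C.to A B) E W) (src4 A B E W) (tgt4 A B E W)"
    by (rule additive_compose[OF additive_postcomp[OF g] additive_postcomp[OF h]]) (use ob in simp_all)
  then show ?thesis unfolding face1_def .
qed

lemma face2_additive: "additive (face2 a A B E W) (src3 A (C.to B E) W) (tgt3 A (C.to B E) W) (src4 A B E W) (tgt4 A B E W)"
proof -
  have r: "FM (C.tm (C.al A B E) (C.idm W)) \<in> H (src4 A B E W) (src3 A (C.to B E) W)"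
    and h: "tm (idm (FO A)) (cmp (al (FO B) (FO E) (FO W)) (tm (Fc a B E) (idm (FO W))))
      \<in> H (tgt3 A (C.to B E) W) (tgt4 A B E W)"
    using ob by (simp_all add: hom_intro)
  have "additive (\<lambda>x. cmp (tm (idm (FO A)) (cmp (al (FO B) (FO E) (FO W)) (tm (Fc a B E) (idm (FO W)))))
      (cmp x (FM (C.tm (C.al A B E) (C.idm W))))) (src3 A (C.to B E) W) (tgt3 A (C.to B E) W) (src4 A B E W) (tgt4 A B E W)"
    by (rule additive_compose[OF additive_precomp[OF r] additive_postcomp[OF h]]) (use ob in simp_all)
  then show ?thesis unfolding face2_def .
qed

lemma face3_additive: "additive (face3 a A B E W) (src3 A B (C.to E W)) (tgt3 A B (C.to E W)) (src4 A B E W) (tgt4 A B E W)"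
proof -
  have r: "FM (C.al (C.to A B) E W) \<in> H (src4 A B E W) (src3 A B (C.to E W))"
    and h: "tm (idm (FO A)) (tm (idm (FO B)) (Fc a E W)) \<in> H (tgt3 A B (C.to E W)) (tgt4 A B E W)"
    using ob by (simp_all add: hom_intro)
  have "additive (\<lambda>x. cmp (tm (idm (FO A)) (tm (idm (FO B)) (Fc a E W))) (cmp x (FM (C.al (C.to A B) E W))))
      (src3 A B (C.to E W)) (tgt3 A B (C.to E W)) (src4 A B E W) (tgt4 A B E W)"
    by (rule additive_compose[OF additive_precomp[OF r] additive_postcomp[OF h]]) (use ob in simp_all)
  then show ?thesis unfolding face3_def .
qed

lemma face4_additive: "additive (face4 a A B E W) (src3 A B E) (tgt3 A B E) (src4 A B E W) (tgt4 A B E W)"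
proof -
  have r: "Fc a (C.to (C.to A B) E) W \<in> H (src4 A B E W) (to (src3 A B E) (FO W))"
    and h1: "al (FO A) (to (FO B) (FO E)) (FO W)
      \<in> H (to (tgt3 A B E) (FO W)) (to (FO A) (to (to (FO B) (FO E)) (FO W)))"
    and h2: "tm (idm (FO A)) (al (FO B) (FO E) (FO W)) \<in> H (to (FO A) (to (to (FO B) (FO E)) (FO W))) (tgt4 A B E W)"
    using ob by (simp_all add: hom_intro)
  have L: "additive (\<lambda>x. cmp (tm x (idm (FO W))) (Fc a (C.to (C.to A B) E) W))
      (src3 A B E) (tgt3 A B E) (src4 A B E W) (to (tgt3 A B E) (FO W))"
    by (rule additive_compose[OF additive_tm_left[OF id_hom] additive_precomp[OF r]]) (use ob in simp_all)
  have "additive (\<lambda>x. cmp (tm (idm (FO A)) (al (FO B) (FO E) (FO W))) (cmp (al (FO A) (to (FO B) (FO E)) (FO W))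
      (cmp (tm x (idm (FO W))) (Fc a (C.to (C.to A B) E) W)))) (src3 A B E) (tgt3 A B E) (src4 A B E W) (tgt4 A B E W)"
    by (rule additive_compose[OF additive_compose[OF L additive_postcomp[OF h1]] additive_postcomp[OF h2]])
      (use ob in simp_all)
  then show ?thesis unfolding face4_def .
qed

lemmas face_homs [simp] =
  additive_hom[OF face0_additive] additive_hom[OF face1_additive] additive_hom[OF face2_additive]
  additive_hom[OF face3_additive] additive_hom[OF face4_additive]

end

lemma face0_hex_lhs: "A \<in> C.Ob \<Longrightarrow> B \<in> C.Ob \<Longrightarrow> E \<in> C.Ob \<Longrightarrow> W \<in> C.Ob \<Longrightarrow>
    face0 a A B E W (hex_lhs b c B E W) = face2 b A B E W (hex_rhs c a A (C.to B E) W)"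
  unfolding face0_def face2_def hex_lhs_def hex_rhs_def by (simp add: comp_normalize)

lemma face1_hex_rhs: "A \<in> C.Ob \<Longrightarrow> B \<in> C.Ob \<Longrightarrow> E \<in> C.Ob \<Longrightarrow> W \<in> C.Ob \<Longrightarrow>
    face1 a A B E W (hex_rhs b c (C.to A B) E W) = face3 b A B E W (hex_lhs a c A B (C.to E W))"
  unfolding face1_def face3_def hex_lhs_def hex_rhs_def by (simp add: comp_normalize al_natural_comp)

lemma face2_hex_lhs: "A \<in> C.Ob \<Longrightarrow> B \<in> C.Ob \<Longrightarrow> E \<in> C.Ob \<Longrightarrow> W \<in> C.Ob \<Longrightarrow>
    face2 a A B E W (hex_lhs b c A (C.to B E) W) = face4 c A B E W (hex_rhs a b A B E)"
proof -
  assume ob: "A \<in> C.Ob" "B \<in> C.Ob" "E \<in> C.Ob" "W \<in> C.Ob"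
  define R where "R = cmp (tm (cmp (Fc b A (C.to B E)) (FM (C.al A B E))) (idm (FO W))) (Fc c (C.to (C.to A B) E) W)"
  have R: "R \<in> Arr" "cd R = to (to (FO A) (FO (C.to B E))) (FO W)"
    unfolding R_def using ob by simp_all
  have "face2 a A B E W (hex_lhs b c A (C.to B E) W) =
      cmp (tm (idm (FO A)) (al (FO B) (FO E) (FO W))) (cmp (tm (idm (FO A)) (tm (Fc a B E) (idm (FO W))))
        (cmp (al (FO A) (FO (C.to B E)) (FO W)) R))"
    unfolding face2_def hex_lhs_def R_def using ob by (simp add: comp_normalize Fc_natural_arr)
  also have "cmp (tm (idm (FO A)) (tm (Fc a B E) (idm (FO W)))) (cmp (al (FO A) (FO (C.to B E)) (FO W)) R)
      = cmp (al (FO A) (to (FO B) (FO E)) (FO W)) (cmp (tm (tm (idm (FO A)) (Fc a B E)) (idm (FO W))) R)"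
    by (rule al_natural_comp'[symmetric]) (use ob R in simp_all)
  also have "cmp (tm (idm (FO A)) (al (FO B) (FO E) (FO W)))
      (cmp (al (FO A) (to (FO B) (FO E)) (FO W)) (cmp (tm (tm (idm (FO A)) (Fc a B E)) (idm (FO W))) R))
      = face4 c A B E W (hex_rhs a b A B E)"
    unfolding face4_def hex_rhs_def R_def using ob by (simp add: comp_normalize)
  finally show ?thesis .
qed

lemma face4_hex_lhs: "A \<in> C.Ob \<Longrightarrow> B \<in> C.Ob \<Longrightarrow> E \<in> C.Ob \<Longrightarrow> W \<in> C.Ob \<Longrightarrow>
    face4 a A B E W (hex_lhs b c A B E) = face1 b A B E W (hex_lhs c a (C.to A B) E W)"
proof -
  assume ob: "A \<in> C.Ob" "B \<in> C.Ob" "E \<in> C.Ob" "W \<in> C.Ob"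
  define R2 where "R2 = cmp (tm (Fc c (C.to A B) E) (idm (FO W))) (Fc a (C.to (C.to A B) E) W)"
  have R2: "R2 \<in> Arr" "cd R2 = to (to (FO (C.to A B)) (FO E)) (FO W)"
    unfolding R2_def using ob by simp_all
  define R where "R = cmp (tm (tm (Fc b A B) (idm (FO E))) (idm (FO W))) R2"
  have R: "R \<in> Arr" "cd R = to (to (to (FO A) (FO B)) (FO E)) (FO W)"
    unfolding R_def using ob R2 by simp_all
  have "face4 a A B E W (hex_lhs b c A B E) =
      cmp (tm (idm (FO A)) (al (FO B) (FO E) (FO W))) (cmp (al (FO A) (to (FO B) (FO E)) (FO W))
        (cmp (tm (al (FO A) (FO B) (FO E)) (idm (FO W))) R))"
    unfolding face4_def hex_lhs_def R_def R2_def using ob by (simp add: comp_normalize)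
  also have "\<dots> = cmp (al (FO A) (FO B) (to (FO E) (FO W))) (cmp (al (to (FO A) (FO B)) (FO E) (FO W)) R)"
    by (rule pentagon_comp) (use ob R in simp_all)
  also have "cmp (al (to (FO A) (FO B)) (FO E) (FO W)) R
      = cmp (tm (Fc b A B) (tm (idm (FO E)) (idm (FO W)))) (cmp (al (FO (C.to A B)) (FO E) (FO W)) R2)"
    unfolding R_def by (rule al_natural_comp') (use ob R2 in simp_all)
  also have "cmp (al (FO A) (FO B) (to (FO E) (FO W)))
      (cmp (tm (Fc b A B) (tm (idm (FO E)) (idm (FO W)))) (cmp (al (FO (C.to A B)) (FO E) (FO W)) R2))
      = face1 b A B E W (hex_lhs c a (C.to A B) E W)"
    unfolding face1_def hex_lhs_def R2_def using ob by (simp add: comp_normalize)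
  finally show ?thesis .
qed

lemma FM_pentagon: "A \<in> C.Ob \<Longrightarrow> B \<in> C.Ob \<Longrightarrow> E \<in> C.Ob \<Longrightarrow> W \<in> C.Ob \<Longrightarrow>
    cmp (FM (C.tm (C.idm A) (C.al B E W))) (cmp (FM (C.al A (C.to B E) W)) (FM (C.tm (C.al A B E) (C.idm W))))
    = cmp (FM (C.al A B (C.to E W))) (FM (C.al (C.to A B) E W))"
proof -
  assume ob: "A \<in> C.Ob" "B \<in> C.Ob" "E \<in> C.Ob" "W \<in> C.Ob"
  have "cmp (FM (C.tm (C.idm A) (C.al B E W))) (cmp (FM (C.al A (C.to B E) W)) (FM (C.tm (C.al A B E) (C.idm W))))
      = FM (C.cmp (C.tm (C.idm A) (C.al B E W)) (C.cmp (C.al A (C.to B E) W) (C.tm (C.al A B E) (C.idm W))))"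
    using ob by (simp add: FM_comp_arr)
  also have "\<dots> = FM (C.cmp (C.al A B (C.to E W)) (C.al (C.to A B) E W))"
    using C.pentagon ob by simp
  also have "\<dots> = cmp (FM (C.al A B (C.to E W))) (FM (C.al (C.to A B) E W))"
    using ob by (simp add: FM_comp_arr)
  finally show ?thesis .
qed

lemma face0_hex_rhs: "A \<in> C.Ob \<Longrightarrow> B \<in> C.Ob \<Longrightarrow> E \<in> C.Ob \<Longrightarrow> W \<in> C.Ob \<Longrightarrow>
    face0 a A B E W (hex_rhs b c B E W) = face3 b A B E W (hex_rhs c a A B (C.to E W))"
proof -
  assume ob: "A \<in> C.Ob" "B \<in> C.Ob" "E \<in> C.Ob" "W \<in> C.Ob"
  define R where "R = cmp (FM (C.al A (C.to B E) W)) (FM (C.tm (C.al A B E) (C.idm W)))"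
  have R: "R \<in> Arr" "cd R = FO (C.to A (C.to (C.to B E) W))"
    unfolding R_def using ob by simp_all
  have "face0 a A B E W (hex_rhs b c B E W) =
      cmp (tm (idm (FO A)) (cmp (tm (idm (FO B)) (Fc b E W)) (Fc c B (C.to E W))))
        (cmp (tm (FM (C.idm A)) (FM (C.al B E W))) (cmp (Fc a A (C.to (C.to B E) W)) R))"
    unfolding face0_def hex_rhs_def R_def using ob by (simp add: comp_normalize)
  also have "cmp (tm (FM (C.idm A)) (FM (C.al B E W))) (cmp (Fc a A (C.to (C.to B E) W)) R)
      = cmp (Fc a A (C.to B (C.to E W))) (cmp (FM (C.tm (C.idm A) (C.al B E W))) R)"
    by (rule Fc_natural_comp') (use ob R in simp_all)
  also have "cmp (FM (C.tm (C.idm A) (C.al B E W))) R = cmp (FM (C.al A B (C.to E W))) (FM (C.al (C.to A B) E W))"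
    unfolding R_def by (rule FM_pentagon[OF ob])
  also have "cmp (tm (idm (FO A)) (cmp (tm (idm (FO B)) (Fc b E W)) (Fc c B (C.to E W))))
      (cmp (Fc a A (C.to B (C.to E W))) (cmp (FM (C.al A B (C.to E W))) (FM (C.al (C.to A B) E W))))
      = face3 b A B E W (hex_rhs c a A B (C.to E W))"
    unfolding face3_def hex_rhs_def using ob by (simp add: comp_normalize)
  finally show ?thesis .
qed

definition bianchi_term :: "'o1 \<Rightarrow> 'o1 \<Rightarrow> 'o1 \<Rightarrow> 'o1 \<Rightarrow> nat \<Rightarrow> nat \<Rightarrow> nat \<Rightarrow> 'm2" where
  "bianchi_term A B E W a b c = alt5
     (add (face0 a A B E W (hex_lhs b c B E W)) (ng (face0 a A B E W (hex_rhs b c B E W))))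
     (add (face1 a A B E W (hex_lhs b c (C.to A B) E W)) (ng (face1 a A B E W (hex_rhs b c (C.to A B) E W))))
     (add (face2 a A B E W (hex_lhs b c A (C.to B E) W)) (ng (face2 a A B E W (hex_rhs b c A (C.to B E) W))))
     (add (face3 a A B E W (hex_lhs b c A B (C.to E W))) (ng (face3 a A B E W (hex_rhs b c A B (C.to E W)))))
     (add (face4 a A B E W (hex_lhs b c A B E)) (ng (face4 a A B E W (hex_rhs b c A B E))))"

lemma bianchi_term_hom [simp]: "A \<in> C.Ob \<Longrightarrow> B \<in> C.Ob \<Longrightarrow> E \<in> C.Ob \<Longrightarrow> W \<in> C.Ob \<Longrightarrow>
    bianchi_term A B E W a b c \<in> H (src4 A B E W) (tgt4 A B E W)"
  unfolding bianchi_term_def by simp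

lemma delta3_hex_defect: "A \<in> C.Ob \<Longrightarrow> B \<in> C.Ob \<Longrightarrow> E \<in> C.Ob \<Longrightarrow> W \<in> C.Ob \<Longrightarrow>
    delta3 C D FO FM (Fc a) (hex_defect m) A B E W
    = ls (src4 A B E W) (tgt4 A B E W) (\<lambda>b. bianchi_term A B E W a b (m - b)) (Suc m)"
proof -
  assume ob: "A \<in> C.Ob" "B \<in> C.Ob" "E \<in> C.Ob" "W \<in> C.Ob"
  have e0: "face0 a A B E W (hex_defect m B E W) = ls (src4 A B E W) (tgt4 A B E W)
      (\<lambda>b. add (face0 a A B E W (hex_lhs b (m - b) B E W)) (ng (face0 a A B E W (hex_rhs b (m - b) B E W)))) (Suc m)"
    by (rule additive_hex_defect[OF face0_additive[OF ob]]) (use ob in simp_all)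
  have e1: "face1 a A B E W (hex_defect m (C.to A B) E W) = ls (src4 A B E W) (tgt4 A B E W)
      (\<lambda>b. add (face1 a A B E W (hex_lhs b (m - b) (C.to A B) E W)) (ng (face1 a A B E W (hex_rhs b (m - b) (C.to A B) E W)))) (Suc m)"
    by (rule additive_hex_defect[OF face1_additive[OF ob]]) (use ob in simp_all)
  have e2: "face2 a A B E W (hex_defect m A (C.to B E) W) = ls (src4 A B E W) (tgt4 A B E W)
      (\<lambda>b. add (face2 a A B E W (hex_lhs b (m - b) A (C.to B E) W)) (ng (face2 a A B E W (hex_rhs b (m - b) A (C.to B E) W)))) (Suc m)"
    by (rule additive_hex_defect[OF face2_additive[OF ob]]) (use ob in simp_all)
  have e3: "face3 a A B E W (hex_defect m A B (C.to E W)) = ls (src4 A B E W) (tgt4 A B E W)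
      (\<lambda>b. add (face3 a A B E W (hex_lhs b (m - b) A B (C.to E W))) (ng (face3 a A B E W (hex_rhs b (m - b) A B (C.to E W))))) (Suc m)"
    by (rule additive_hex_defect[OF face3_additive[OF ob]]) (use ob in simp_all)
  have e4: "face4 a A B E W (hex_defect m A B E) = ls (src4 A B E W) (tgt4 A B E W)
      (\<lambda>b. add (face4 a A B E W (hex_lhs b (m - b) A B E)) (ng (face4 a A B E W (hex_rhs b (m - b) A B E)))) (Suc m)"
    by (rule additive_hex_defect[OF face4_additive[OF ob]]) (use ob in simp_all)
  show ?thesis
    unfolding delta3_faces e0 e1 e2 e3 e4 bianchi_term_def
    by (rule lsum_alt5[symmetric]) (use ob in simp_all)
qed

lemma delta3_hex_defect_hom: "A \<in> C.Ob \<Longrightarrow> B \<in> C.Ob \<Longrightarrow> E \<in> C.Ob \<Longrightarrow> W \<in> C.Ob \<Longrightarrow>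
    delta3 C D FO FM (Fc a) (hex_defect m) A B E W \<in> H (src4 A B E W) (tgt4 A B E W)"
  by (simp add: delta3_hex_defect lsum_hom del: lsum.simps)

lemma delta3_hex_defect_eq_zero: "A \<in> C.Ob \<Longrightarrow> B \<in> C.Ob \<Longrightarrow> E \<in> C.Ob \<Longrightarrow> W \<in> C.Ob \<Longrightarrow> m \<le> n \<Longrightarrow>
    delta3 C D FO FM (Fc a) (hex_defect m) A B E W = zr (src4 A B E W) (tgt4 A B E W)"
  unfolding delta3_faces alt5_def
  by (simp add: hex_defect_eq_zero additive_zr[OF face0_additive] additive_zr[OF face1_additive]
      additive_zr[OF face2_additive] additive_zr[OF face3_additive] additive_zr[OF face4_additive])

lemma conv3_face_pairs:
  fixes N :: nat
  assumes ob: "A \<in> C.Ob" "B \<in> C.Ob" "E \<in> C.Ob" "W \<in> C.Ob"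
  defines "\<Sigma> \<equiv> conv3 (src4 A B E W) (tgt4 A B E W) N"
  shows "\<Sigma> (\<lambda>a b c. face0 a A B E W (hex_lhs b c B E W)) = \<Sigma> (\<lambda>a b c. face2 a A B E W (hex_rhs b c A (C.to B E) W))"
    and "\<Sigma> (\<lambda>a b c. face1 a A B E W (hex_rhs b c (C.to A B) E W)) = \<Sigma> (\<lambda>a b c. face3 a A B E W (hex_lhs b c A B (C.to E W)))"
    and "\<Sigma> (\<lambda>a b c. face2 a A B E W (hex_lhs b c A (C.to B E) W)) = \<Sigma> (\<lambda>a b c. face4 a A B E W (hex_rhs b c A B E))"
    and "\<Sigma> (\<lambda>a b c. face4 a A B E W (hex_lhs b c A B E)) = \<Sigma> (\<lambda>a b c. face1 a A B E W (hex_lhs b c (C.to A B) E W))"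
    and "\<Sigma> (\<lambda>a b c. face0 a A B E W (hex_rhs b c B E W)) = \<Sigma> (\<lambda>a b c. face3 a A B E W (hex_rhs b c A B (C.to E W)))"
proof -
  have rot: "\<Sigma> (\<lambda>a b c. f b c a) = \<Sigma> f" and swap: "\<Sigma> (\<lambda>a b c. f b a c) = \<Sigma> f"
    if "\<And>a b c. f a b c \<in> H (src4 A B E W) (tgt4 A B E W)" for f
    unfolding \<Sigma>_def by (rule conv3_rotate conv3_swap; use that ob in simp)+
  show "\<Sigma> (\<lambda>a b c. face0 a A B E W (hex_lhs b c B E W)) = \<Sigma> (\<lambda>a b c. face2 a A B E W (hex_rhs b c A (C.to B E) W))"
    unfolding face0_hex_lhs[OF ob] by (rule rot) (use ob in simp)
  show "\<Sigma> (\<lambda>a b c. face1 a A B E W (hex_rhs b c (C.to A B) E W)) = \<Sigma> (\<lambda>a b c. face3 a A B E W (hex_lhs b c A B (C.to E W)))"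
    unfolding face1_hex_rhs[OF ob] by (rule swap) (use ob in simp)
  show "\<Sigma> (\<lambda>a b c. face2 a A B E W (hex_lhs b c A (C.to B E) W)) = \<Sigma> (\<lambda>a b c. face4 a A B E W (hex_rhs b c A B E))"
    unfolding face2_hex_lhs[OF ob] by (rule rot[symmetric]) (use ob in simp)
  show "\<Sigma> (\<lambda>a b c. face4 a A B E W (hex_lhs b c A B E)) = \<Sigma> (\<lambda>a b c. face1 a A B E W (hex_lhs b c (C.to A B) E W))"
    unfolding face4_hex_lhs[OF ob] by (rule rot) (use ob in simp)
  show "\<Sigma> (\<lambda>a b c. face0 a A B E W (hex_rhs b c B E W)) = \<Sigma> (\<lambda>a b c. face3 a A B E W (hex_rhs b c A B (C.to E W)))"
    unfolding face0_hex_rhs[OF ob] by (rule rot) (use ob in simp)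
qed

lemma bianchi_identity: "A \<in> C.Ob \<Longrightarrow> B \<in> C.Ob \<Longrightarrow> E \<in> C.Ob \<Longrightarrow> W \<in> C.Ob \<Longrightarrow>
    ls (src4 A B E W) (tgt4 A B E W) (\<lambda>a. delta3 C D FO FM (Fc a) (hex_defect (N - a)) A B E W) (Suc N)
    = zr (src4 A B E W) (tgt4 A B E W)"
proof -
  assume ob: "A \<in> C.Ob" "B \<in> C.Ob" "E \<in> C.Ob" "W \<in> C.Ob"
  let ?\<Sigma> = "conv3 (src4 A B E W) (tgt4 A B E W) N"
  have "ls (src4 A B E W) (tgt4 A B E W) (\<lambda>a. delta3 C D FO FM (Fc a) (hex_defect (N - a)) A B E W) (Suc N)
      = ?\<Sigma> (bianchi_term A B E W)"
    using ob by (simp add: delta3_hex_defect conv3_eq_lsum diff_diff_left del: lsum.simps)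
  also have "\<dots> = alt5
      (?\<Sigma> (\<lambda>a b c. add (face0 a A B E W (hex_lhs b c B E W)) (ng (face0 a A B E W (hex_rhs b c B E W)))))
      (?\<Sigma> (\<lambda>a b c. add (face1 a A B E W (hex_lhs b c (C.to A B) E W)) (ng (face1 a A B E W (hex_rhs b c (C.to A B) E W)))))
      (?\<Sigma> (\<lambda>a b c. add (face2 a A B E W (hex_lhs b c A (C.to B E) W)) (ng (face2 a A B E W (hex_rhs b c A (C.to B E) W)))))
      (?\<Sigma> (\<lambda>a b c. add (face3 a A B E W (hex_lhs b c A B (C.to E W))) (ng (face3 a A B E W (hex_rhs b c A B (C.to E W))))))
      (?\<Sigma> (\<lambda>a b c. add (face4 a A B E W (hex_lhs b c A B E)) (ng (face4 a A B E W (hex_rhs b c A B E)))))"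
    unfolding bianchi_term_def[abs_def] by (rule conv3_alt5) (use ob in simp_all)
  also have "\<dots> = alt5
      (add (?\<Sigma> (\<lambda>a b c. face0 a A B E W (hex_lhs b c B E W))) (ng (?\<Sigma> (\<lambda>a b c. face0 a A B E W (hex_rhs b c B E W)))))
      (add (?\<Sigma> (\<lambda>a b c. face1 a A B E W (hex_lhs b c (C.to A B) E W))) (ng (?\<Sigma> (\<lambda>a b c. face1 a A B E W (hex_rhs b c (C.to A B) E W)))))
      (add (?\<Sigma> (\<lambda>a b c. face2 a A B E W (hex_lhs b c A (C.to B E) W))) (ng (?\<Sigma> (\<lambda>a b c. face2 a A B E W (hex_rhs b c A (C.to B E) W)))))
      (add (?\<Sigma> (\<lambda>a b c. face3 a A B E W (hex_lhs b c A B (C.to E W)))) (ng (?\<Sigma> (\<lambda>a b c. face3 a A B E W (hex_rhs b c A B (C.to E W))))))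
      (add (?\<Sigma> (\<lambda>a b c. face4 a A B E W (hex_lhs b c A B E))) (ng (?\<Sigma> (\<lambda>a b c. face4 a A B E W (hex_rhs b c A B E)))))"
    using ob by (simp add: conv3_diff)
  also have "\<dots> = zr (src4 A B E W) (tgt4 A B E W)"
    unfolding conv3_face_pairs[OF ob] by (rule five_differences_cancel) (use ob in \<open>simp_all add: conv3_hom\<close>)
  finally show ?thesis .
qed

lemma delta3_obstruction_eq_zero: "A \<in> C.Ob \<Longrightarrow> B \<in> C.Ob \<Longrightarrow> E \<in> C.Ob \<Longrightarrow> W \<in> C.Ob \<Longrightarrow>
    delta3 C D FO FM Ft (obstruction C D FO FM n Fk) A B E W = zr (src4 A B E W) (tgt4 A B E W)"
proof -
  assume ob: "A \<in> C.Ob" "B \<in> C.Ob" "E \<in> C.Ob" "W \<in> C.Ob"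
  let ?\<delta> = "\<lambda>a m. delta3 C D FO FM (Fc a) (hex_defect m) A B E W"
  have "zr (src4 A B E W) (tgt4 A B E W) = ls (src4 A B E W) (tgt4 A B E W) (\<lambda>a. ?\<delta> a (Suc n - a)) (Suc (Suc n))"
    by (rule bianchi_identity[OF ob, symmetric])
  also have "\<dots> = add (?\<delta> 0 (Suc n)) (ls (src4 A B E W) (tgt4 A B E W) (\<lambda>i. ?\<delta> (Suc i) (n - i)) (Suc n))"
    by (subst lsum_shift) (use ob delta3_hex_defect_hom[OF ob] in simp_all)
  also have "ls (src4 A B E W) (tgt4 A B E W) (\<lambda>i. ?\<delta> (Suc i) (n - i)) (Suc n) = zr (src4 A B E W) (tgt4 A B E W)"
    by (rule lsum_zero) (use ob delta3_hex_defect_eq_zero[OF ob] in simp_all)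
  finally have "?\<delta> 0 (Suc n) = zr (src4 A B E W) (tgt4 A B E W)"
    using add_zero[OF delta3_hex_defect_hom[OF ob, of 0 "Suc n"]] by simp
  moreover have "delta3 C D FO FM Ft (obstruction C D FO FM n Fk) A B E W = ?\<delta> 0 (Suc n)"
    unfolding Fc_0 delta3_def Let_def using ob by (simp add: obstruction_eq_hex_defect)
  ultimately show ?thesis by simp
qed

lemma obstruction_is_3cocycle: "is_3cocycle C D FO FM Ft (obstruction C D FO FM n Fk)"
  unfolding is_3cocycle_def inC3_def inX3_def
proof (intro conjI ballI impI allI)
  fix A B E assume ob: "A \<in> C.Ob" "B \<in> C.Ob" "E \<in> C.Ob"
  show "obstruction C D FO FM n Fk A B E \<in> H (src3 A B E) (tgt3 A B E)"
    using ob hex_defect_hom by (simp add: obstruction_eq_hex_defect)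
next
  fix f g h assume arr: "f \<in> C.Arr" "g \<in> C.Arr" "h \<in> C.Arr"
  show "cmp (obstruction C D FO FM n Fk (C.cd f) (C.cd g) (C.cd h)) (FM (C.tm (C.tm f g) h)) =
      cmp (tm (FM f) (tm (FM g) (FM h))) (obstruction C D FO FM n Fk (C.dm f) (C.dm g) (C.dm h))"
    using arr hex_defect_natural[OF C.arr_hom C.arr_hom C.arr_hom] by (simp add: obstruction_eq_hex_defect)
next
  fix A B E assume ob: "A \<in> C.Ob" "B \<in> C.Ob" "E \<in> C.Ob" and u: "A = C.tunit \<or> B = C.tunit \<or> E = C.tunit"
  show "obstruction C D FO FM n Fk A B E = zr (src3 A B E) (tgt3 A B E)"
    using hex_defect_tunit[OF ob u] ob by (simp add: obstruction_eq_hex_defect)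
next
  fix A B E W assume ob: "A \<in> C.Ob" "B \<in> C.Ob" "E \<in> C.Ob" "W \<in> C.Ob"
  show "delta3 C D FO FM Ft (obstruction C D FO FM n Fk) A B E W = zr (src4 A B E W) (tgt4 A B E W)"
    by (rule delta3_obstruction_eq_zero[OF ob])
qed

end

theorem proposition3p6:
  fixes C :: "('o1, 'm1, 'z1) moncat_scheme"
    and D :: "('k::field, 'o2, 'm2, 'z2) linmoncat_scheme"
    and FO :: "'o1 \<Rightarrow> 'o2" and FM :: "'m1 \<Rightarrow> 'm2"
    and Ft :: "'o1 \<Rightarrow> 'o1 \<Rightarrow> 'm2" and F0 :: "'m2"
    and n :: nat and Fk :: "nat \<Rightarrow> 'o1 \<Rightarrow> 'o1 \<Rightarrow> 'm2"
  assumes "is_moncat C"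
    and "is_linmoncat D"
    and "is_monfun C D FO FM Ft F0"
    and "is_proper_deformation C D FO FM Ft F0 n Fk"
  shows "(\<forall>k\<in>{1..n}. inC2 C D FO FM (Fk k)) \<and>
         is_3cocycle C D FO FM Ft (obstruction C D FO FM n Fk)"
proof -
  have "is_moncat D"
    using assms(2) unfolding is_linmoncat_def by simp
  then interpret proper_deformation C D FO FM Ft F0 n Fk
    by unfold_locales (use assms in simp_all)
  show ?thesis
    using Fk_in_C2 obstruction_is_3cocycle by blast
qed

end
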